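(* Fix a positive integer $n$, let $x=(x_1,\dots,x_n)$ and $u=(u_1,u_2,\dots)$, and let $\lambda$ be a partition with at most $n$ rows. Then $$s_\lambda(x\,|\,u)=\sum_T\prod_{\substack{\alpha\in\lambda\\ T(\alpha)\text{ unprimed}}}x_{T(\alpha)}\prod_{\substack{\alpha\in\lambda\\ T(\alpha)\text{ primed}}}\big(-u_{T(\alpha)}\big),$$ summed over all $\lambda$-supertableaux $T$ (for a primed entry $k'$, $u_{T(\alpha)}$ means $u_k$).
   Context: Partitions are identified with Young diagrams; box $(i,j)$ has content $c(\alpha)=j-i$; $\lambda'_j$ is the length of column $j$. $s_\lambda(x|u)=\sum_T\prod_{\alpha\in\lambda}(x_{T(\alpha)}-u_{T(\alpha)+c(\alpha)})$, summed over semistandard (weakly increasing along rows, strictly increasing down columns) tableaux $T$ of shape $\lambda$ with entries in $\{1,\dots,n\}$. A $\lambda$-supertableau is a filling of $\lambda$ with symbols from $\{1,\dots,n\}\cup\{1',2',3',\dots\}$ such that: in each row (resp. column) every primed symbol lies to the right of (resp. below) every unprimed symbol; unprimed symbols weakly increase along rows and strictly increase down columns; primed symbols strictly increase along rows and weakly increase down columns (comparing $k'$ by $k$); and every primed symbol $k'$ in column $j$ satisfies $k\le n-\lambda'_j+j$. *)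

theory Defs
  imports "HOL-Library.FuncSet"
begin

text \<open>A partition is a list of positive parts in weakly decreasing order.
  Rows and columns are indexed from 1; box (i,j) lies in row i, column j.\<close>

definition is_partition :: "nat list \<Rightarrow> bool" where
  "is_partition lam \<longleftrightarrow> (\<forall>p \<in> set lam. 0 < p) \<and> sorted (rev lam)"

definition boxes :: "nat list \<Rightarrow> (nat \<times> nat) set" where
  "boxes lam = {(i, j). 1 \<le> i \<and> i \<le> length lam \<and> 1 \<le> j \<and> j \<le> lam ! (i - 1)}"

definition content :: "nat \<times> nat \<Rightarrow> int" where
  "content a = int (snd a) - int (fst a)"

definition col_len :: "nat list \<Rightarrow> nat \<Rightarrow> nat" where
  "col_len lam j = card {i. (i, j) \<in> boxes lam}"

definition ssyt :: "nat \<Rightarrow> nat list \<Rightarrow> ((nat \<times> nat) \<Rightarrow> nat) set" where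
  "ssyt n lam = {T \<in> boxes lam \<rightarrow>\<^sub>E {1..n}.
     (\<forall>i j j'. (i, j) \<in> boxes lam \<and> (i, j') \<in> boxes lam \<and> j < j' \<longrightarrow> T (i, j) \<le> T (i, j')) \<and>
     (\<forall>i i' j. (i, j) \<in> boxes lam \<and> (i', j) \<in> boxes lam \<and> i < i' \<longrightarrow> T (i, j) < T (i', j))}"

definition factorial_schur :: "nat \<Rightarrow> nat list \<Rightarrow> (nat \<Rightarrow> 'a::comm_ring_1) \<Rightarrow> (nat \<Rightarrow> 'a) \<Rightarrow> 'a" where
  "factorial_schur n lam x u =
     (\<Sum>T \<in> ssyt n lam. \<Prod>a \<in> boxes lam. (x (T a) - u (nat (int (T a) + content a))))"

datatype sym = Unp nat | Pr nat

fun symval :: "sym \<Rightarrow> nat" where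
  "symval (Unp k) = k" | "symval (Pr k) = k"

fun is_primed :: "sym \<Rightarrow> bool" where
  "is_primed (Unp k) = False" | "is_primed (Pr k) = True"

definition symbols :: "nat \<Rightarrow> sym set" where
  "symbols n = Unp ` {1..n} \<union> Pr ` {1..}"

definition supertableaux :: "nat \<Rightarrow> nat list \<Rightarrow> ((nat \<times> nat) \<Rightarrow> sym) set" where
  "supertableaux n lam = {T \<in> boxes lam \<rightarrow>\<^sub>E symbols n.
     \<comment> \<open>rows: primed symbols lie to the right of unprimed ones\<close>
     (\<forall>i j j'. (i, j) \<in> boxes lam \<and> (i, j') \<in> boxes lam \<and> j < j' \<longrightarrow>
        \<not> (is_primed (T (i, j)) \<and> \<not> is_primed (T (i, j')))) \<and>
     \<comment> \<open>columns: primed symbols lie below unprimed ones\<close>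
     (\<forall>i i' j. (i, j) \<in> boxes lam \<and> (i', j) \<in> boxes lam \<and> i < i' \<longrightarrow>
        \<not> (is_primed (T (i, j)) \<and> \<not> is_primed (T (i', j)))) \<and>
     \<comment> \<open>unprimed: weakly increasing along rows\<close>
     (\<forall>i j j'. (i, j) \<in> boxes lam \<and> (i, j') \<in> boxes lam \<and> j < j' \<and>
        \<not> is_primed (T (i, j)) \<and> \<not> is_primed (T (i, j')) \<longrightarrow> symval (T (i, j)) \<le> symval (T (i, j'))) \<and>
     \<comment> \<open>unprimed: strictly increasing down columns\<close>
     (\<forall>i i' j. (i, j) \<in> boxes lam \<and> (i', j) \<in> boxes lam \<and> i < i' \<and>
        \<not> is_primed (T (i, j)) \<and> \<not> is_primed (T (i', j)) \<longrightarrow> symval (T (i, j)) < symval (T (i', j))) \<and>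
     \<comment> \<open>primed: strictly increasing along rows\<close>
     (\<forall>i j j'. (i, j) \<in> boxes lam \<and> (i, j') \<in> boxes lam \<and> j < j' \<and>
        is_primed (T (i, j)) \<and> is_primed (T (i, j')) \<longrightarrow> symval (T (i, j)) < symval (T (i, j'))) \<and>
     \<comment> \<open>primed: weakly increasing down columns\<close>
     (\<forall>i i' j. (i, j) \<in> boxes lam \<and> (i', j) \<in> boxes lam \<and> i < i' \<and>
        is_primed (T (i, j)) \<and> is_primed (T (i', j)) \<longrightarrow> symval (T (i, j)) \<le> symval (T (i', j))) \<and>
     \<comment> \<open>bound on primed entries: k' in column j has k \<le> n - lambda'_j + j\<close>
     (\<forall>i j. (i, j) \<in> boxes lam \<and> is_primed (T (i, j)) \<longrightarrow>
        int (symval (T (i, j))) \<le> int n - int (col_len lam j) + int j)}"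

end

theory Submission
  imports Defs
begin

text \<open>
  The proof is a transfer-matrix argument on chains of shapes.  A shape is a down-closed
  set of boxes; for a weight g on boxes, the horizontal-strip operator maps a shape D to every
  shape E \<supseteq> D for which E/D is a horizontal strip, with weight the product of g over E - D.
  The chain sum of a list of weights is the product of these operators.

  \<^item> A skew semistandard tableau with entries \<le> b is a chain of b horizontal strips, so every
    tableau sum is a chain sum.  Hence s_lambda(x|u) is the chain sum of the operators
    x_m + w(m + c), m = 1..n, where w z = -u_z for z \<ge> 1 and w z = 0 otherwise.
  \<^item> A supertableau splits into its unprimed part (a tableau of a subshape nu) and its primed
    part, which after the shift k' \<mapsto> k - c + N (N = |lambda|) becomes a tableau of lambda/nu.
    Hence the right-hand side is the chain sum of x_1, ..., x_n followed by w(q - N + c),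
    q = 1..n+N.
  \<^item> Two consecutive operators y + H(c), H(c + 1) may be exchanged for H(c), y + H(c + 1);
    row by row this is an identity between one-row interval sums.
  \<^item> Commuting all x-operators to the end, the u-operators act first on the empty shape, where
    they are trivial, and what remains is exactly the chain sum of the first item.

\<close>

section \<open>Shapes, horizontal strips and chain sums\<close>

definition is_shape :: "(nat \<times> nat) set \<Rightarrow> bool" where
  "is_shape D \<longleftrightarrow> (\<forall>i j. (i, j) \<in> D \<longrightarrow> 1 \<le> i \<and> 1 \<le> j) \<and>
     (\<forall>i j i' j'. (i, j) \<in> D \<and> 1 \<le> i' \<and> i' \<le> i \<and> 1 \<le> j' \<and> j' \<le> j \<longrightarrow> (i', j') \<in> D)"

text \<open>E/D is a horizontal strip: no two boxes of E - D lie in the same column.\<close>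
definition horiz_strip :: "(nat \<times> nat) set \<Rightarrow> (nat \<times> nat) set \<Rightarrow> bool" where
  "horiz_strip D E \<longleftrightarrow> D \<subseteq> E \<and> (\<forall>i j. (Suc i, j) \<in> E \<and> 1 \<le> i \<longrightarrow> (i, j) \<in> D)"

text \<open>The shapes contained in a fixed frame L; they index the rows of the transfer matrices.\<close>
definition shapes_in :: "(nat \<times> nat) set \<Rightarrow> (nat \<times> nat) set set" where
  "shapes_in L = {D. D \<subseteq> L \<and> is_shape D}"

definition strip_weight :: "((nat \<times> nat) \<Rightarrow> 'a::comm_ring_1) \<Rightarrow> (nat \<times> nat) set \<Rightarrow> (nat \<times> nat) set \<Rightarrow> 'a" where
  "strip_weight g D E = (if horiz_strip D E then \<Prod>a\<in>E - D. g a else 0)"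

fun chain_sum :: "(nat \<times> nat) set \<Rightarrow> ((nat \<times> nat) \<Rightarrow> 'a::comm_ring_1) list \<Rightarrow> (nat \<times> nat) set \<Rightarrow> (nat \<times> nat) set \<Rightarrow> 'a" where
  "chain_sum L [] D E = (if D = E then 1 else 0)"
| "chain_sum L (g # gs) D E = (\<Sum>F\<in>shapes_in L. strip_weight g D F * chain_sum L gs F E)"

lemma is_shapeD: "is_shape D \<Longrightarrow> (i, j) \<in> D \<Longrightarrow> 1 \<le> i' \<Longrightarrow> i' \<le> i \<Longrightarrow> 1 \<le> j' \<Longrightarrow> j' \<le> j \<Longrightarrow> (i', j') \<in> D"
  unfolding is_shape_def by blast

lemma is_shape_pos: "is_shape D \<Longrightarrow> (i, j) \<in> D \<Longrightarrow> 1 \<le> i \<and> 1 \<le> j"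
  unfolding is_shape_def by blast

lemma finite_shapes_in: "finite L \<Longrightarrow> finite (shapes_in L)"
  unfolding shapes_in_def by (rule finite_subset[of _ "Pow L"]) auto

lemma empty_in_shapes_in: "{} \<in> shapes_in L"
  unfolding shapes_in_def is_shape_def by auto

lemma chain_sum_append:
  assumes "finite L" "D \<in> shapes_in L"
  shows "chain_sum L (gs @ gs') D E = (\<Sum>F\<in>shapes_in L. chain_sum L gs D F * chain_sum L gs' F E)"
  using assms(2)
proof (induction gs arbitrary: D)
  case Nil
  have "(\<Sum>F\<in>shapes_in L. chain_sum L [] D F * chain_sum L gs' F E)
      = (\<Sum>F\<in>shapes_in L. if F = D then chain_sum L gs' F E else 0)"
    by (rule sum.cong) auto
  also have "\<dots> = chain_sum L gs' D E"
    using Nil finite_shapes_in[OF assms(1)] by (simp add: sum.delta')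
  finally show ?case by simp
next
  case (Cons g gs)
  have "chain_sum L ((g # gs) @ gs') D E
      = (\<Sum>F\<in>shapes_in L. strip_weight g D F * (\<Sum>G\<in>shapes_in L. chain_sum L gs F G * chain_sum L gs' G E))"
    using Cons.IH by simp
  also have "\<dots> = (\<Sum>F\<in>shapes_in L. \<Sum>G\<in>shapes_in L. strip_weight g D F * chain_sum L gs F G * chain_sum L gs' G E)"
    by (simp add: sum_distrib_left mult.assoc)
  also have "\<dots> = (\<Sum>G\<in>shapes_in L. \<Sum>F\<in>shapes_in L. strip_weight g D F * chain_sum L gs F G * chain_sum L gs' G E)"
    by (rule sum.swap)
  also have "\<dots> = (\<Sum>G\<in>shapes_in L. chain_sum L (g # gs) D G * chain_sum L gs' G E)"
    by (simp add: sum_distrib_right)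
  finally show ?case .
qed

lemma chain_sum_single:
  "finite L \<Longrightarrow> E \<in> shapes_in L \<Longrightarrow> chain_sum L [g] D E = strip_weight g D E"
  using finite_shapes_in[of L] by (simp add: sum.delta' if_distrib cong: if_cong)

lemma chain_sum_pair:
  "finite L \<Longrightarrow> E \<in> shapes_in L \<Longrightarrow>
    chain_sum L [g1, g2] D E = (\<Sum>F\<in>shapes_in L. strip_weight g1 D F * strip_weight g2 F E)"
  using chain_sum_single[of L E g2] by simp

lemma chain_sum_prefix:
  assumes "D \<in> shapes_in L" "\<And>F. F \<in> shapes_in L \<Longrightarrow> chain_sum L l1 F E = chain_sum L l2 F E"
  shows "chain_sum L (pre @ l1) D E = chain_sum L (pre @ l2) D E"
  using assms(1)
proof (induction pre arbitrary: D)
  case Nil then show ?case using assms(2) by simp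
next
  case (Cons g pre) then show ?case by (simp cong: sum.cong)
qed

lemma chain_sum_replace:
  assumes "finite L" "D \<in> shapes_in L"
    and "\<And>F G. F \<in> shapes_in L \<Longrightarrow> G \<in> shapes_in L \<Longrightarrow> chain_sum L l1 F G = chain_sum L l2 F G"
  shows "chain_sum L (pre @ l1 @ post) D E = chain_sum L (pre @ l2 @ post) D E"
proof (rule chain_sum_prefix[OF assms(2)])
  fix F assume F: "F \<in> shapes_in L"
  show "chain_sum L (l1 @ post) F E = chain_sum L (l2 @ post) F E"
    unfolding chain_sum_append[OF assms(1) F] using assms(3)[OF F] by (simp cong: sum.cong)
qed

lemma strip_weight_nonzero: "strip_weight g D F \<noteq> 0 \<Longrightarrow> D \<subseteq> F"
  unfolding strip_weight_def horiz_strip_def by (auto split: if_splits)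

lemma chain_sum_nonzero: "chain_sum L gs D E \<noteq> 0 \<Longrightarrow> D \<subseteq> E"
proof (induction gs arbitrary: D)
  case Nil then show ?case by (simp split: if_splits)
next
  case (Cons g gs)
  then obtain F where "strip_weight g D F * chain_sum L gs F E \<noteq> 0"
    by (metis (no_types, lifting) chain_sum.simps(2) sum.neutral)
  then show ?case using Cons.IH strip_weight_nonzero by (metis mult_not_zero subset_trans)
qed

lemma chain_sum_strip_zero:
  assumes "\<not> (D \<subseteq> F \<and> horiz_strip F E)"
  shows "chain_sum L gs D F * strip_weight g F E = 0"
proof (cases "D \<subseteq> F")
  case True
  then have "strip_weight g F E = 0" using assms by (simp add: strip_weight_def)
  then show ?thesis by simp
next
  case False
  then have "chain_sum L gs D F = 0" using chain_sum_nonzero by blast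
  then show ?thesis by simp
qed

lemma chain_sum_cong:
  assumes "list_all2 (\<lambda>g g'. \<forall>a\<in>L. g a = g' a) gs gs'"
  shows "chain_sum L gs D E = chain_sum L gs' D E"
  using assms
proof (induction gs arbitrary: gs' D)
  case Nil then show ?case by simp
next
  case (Cons g gs)
  then obtain g' gs2 where gs': "gs' = g' # gs2" and gg: "\<forall>a\<in>L. g a = g' a"
    and r: "list_all2 (\<lambda>g g'. \<forall>a\<in>L. g a = g' a) gs gs2"
    by (cases gs') auto
  have "strip_weight g D F = strip_weight g' D F" if "F \<in> shapes_in L" for F
    unfolding strip_weight_def using that gg by (auto simp: shapes_in_def intro!: prod.cong)
  then show ?case using Cons.IH[OF r] gs' by (auto intro!: sum.cong)
qed

section \<open>Skew tableaux are chains of horizontal strips\<close>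

definition skew_ssyt :: "(nat \<times> nat) set \<Rightarrow> (nat \<times> nat) set \<Rightarrow> nat \<Rightarrow> ((nat \<times> nat) \<Rightarrow> nat) set" where
  "skew_ssyt D E b = {T \<in> (E - D) \<rightarrow>\<^sub>E {1..b}.
     (\<forall>i j j'. (i, j) \<in> E - D \<and> (i, j') \<in> E - D \<and> j < j' \<longrightarrow> T (i, j) \<le> T (i, j')) \<and>
     (\<forall>i i' j. (i, j) \<in> E - D \<and> (i', j) \<in> E - D \<and> i < i' \<longrightarrow> T (i, j) < T (i', j))}"

lemma finite_skew_ssyt: "finite E \<Longrightarrow> finite (skew_ssyt D E b)"
  unfolding skew_ssyt_def by (rule finite_subset[of _ "(E - D) \<rightarrow>\<^sub>E {1..b}"]) (auto intro: finite_PiE)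

lemma skew_ssytD:
  assumes "T \<in> skew_ssyt D E b"
  shows "T \<in> (E - D) \<rightarrow>\<^sub>E {1..b}"
    and "\<And>i j j'. (i, j) \<in> E - D \<Longrightarrow> (i, j') \<in> E - D \<Longrightarrow> j < j' \<Longrightarrow> T (i, j) \<le> T (i, j')"
    and "\<And>i i' j. (i, j) \<in> E - D \<Longrightarrow> (i', j) \<in> E - D \<Longrightarrow> i < i' \<Longrightarrow> T (i, j) < T (i', j)"
  using assms unfolding skew_ssyt_def by blast+

lemma skew_ssyt_mono:
  assumes D: "is_shape D" and E: "is_shape E" and T: "T \<in> skew_ssyt D E b"
    and ij: "(i, j) \<in> E - D" and le: "1 \<le> i'" "i' \<le> i" "1 \<le> j'" "j' \<le> j" and nD: "(i', j') \<notin> D"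
  shows "T (i', j') \<le> T (i, j)"
proof -
  have E1: "(i', j') \<in> E" and E2: "(i', j) \<in> E"
    using is_shapeD[OF E, of i j i' j'] is_shapeD[OF E, of i j i' j] ij le by auto
  have nD2: "(i', j) \<notin> D" using is_shapeD[OF D, of i' j i' j'] le nD by auto
  have "T (i', j') \<le> T (i', j)"
    using skew_ssytD(2)[OF T, of i' j' j] E1 E2 nD nD2 le by (cases "j' = j") auto
  also have "\<dots> \<le> T (i, j)"
    using skew_ssytD(3)[OF T, of i' j i] E2 nD2 ij le by (cases "i' = i") auto
  finally show ?thesis .
qed

text \<open>The boxes holding entries \<le> b, together with D, form the intermediate shape of the chain.\<close>
definition lower_part :: "(nat \<times> nat) set \<Rightarrow> (nat \<times> nat) set \<Rightarrow> nat \<Rightarrow> ((nat \<times> nat) \<Rightarrow> nat) \<Rightarrow> (nat \<times> nat) set" where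
  "lower_part D E b T = D \<union> {a \<in> E - D. T a \<le> b}"

lemma lower_part_shape:
  assumes D: "is_shape D" and E: "is_shape E" and DE: "D \<subseteq> E" and T: "T \<in> skew_ssyt D E c"
  shows "is_shape (lower_part D E b T)"
  unfolding is_shape_def
proof (rule conjI; intro allI impI)
  fix i j assume "(i, j) \<in> lower_part D E b T"
  then show "1 \<le> i \<and> 1 \<le> j" using DE is_shape_pos[OF E] by (auto simp: lower_part_def)
next
  fix i j i' j' assume a: "(i, j) \<in> lower_part D E b T \<and> 1 \<le> i' \<and> i' \<le> i \<and> 1 \<le> j' \<and> j' \<le> j"
  show "(i', j') \<in> lower_part D E b T"
  proof (cases "(i, j) \<in> D")
    case True
    then show ?thesis using is_shapeD[OF D True] a by (simp add: lower_part_def)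
  next
    case False
    then have ij: "(i, j) \<in> E - D" "T (i, j) \<le> b" using a by (auto simp: lower_part_def)
    have "(i', j') \<in> E" using is_shapeD[OF E, of i j i' j'] ij a by blast
    moreover have "(i', j') \<notin> D \<Longrightarrow> T (i', j') \<le> T (i, j)"
      using skew_ssyt_mono[OF D E T ij(1)] a by blast
    ultimately show ?thesis using ij by (auto simp: lower_part_def)
  qed
qed

text \<open>Boxes with the largest entry b + 1 form a horizontal strip, by column strictness.\<close>
lemma lower_part_strip:
  assumes D: "is_shape D" and E: "is_shape E" and DE: "D \<subseteq> E" and T: "T \<in> skew_ssyt D E (Suc b)"
  shows "horiz_strip (lower_part D E b T) E"
  unfolding horiz_strip_def
proof (intro conjI allI impI)
  show "lower_part D E b T \<subseteq> E" using DE by (auto simp: lower_part_def)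
next
  fix i j assume a: "(Suc i, j) \<in> E \<and> 1 \<le> i"
  have j1: "1 \<le> j" using is_shape_pos[OF E] a by blast
  have iE: "(i, j) \<in> E" using is_shapeD[OF E, of "Suc i" j i j] a j1 by simp
  show "(i, j) \<in> lower_part D E b T"
  proof (cases "(i, j) \<in> D")
    case True then show ?thesis by (simp add: lower_part_def)
  next
    case False
    have SD: "(Suc i, j) \<notin> D" using is_shapeD[OF D, of "Suc i" j i j] a j1 False by auto
    then have "T (i, j) < T (Suc i, j)" using skew_ssytD(3)[OF T, of i j "Suc i"] False iE a by simp
    moreover have "T (Suc i, j) \<le> Suc b" using PiE_mem[OF skew_ssytD(1)[OF T], of "(Suc i, j)"] a SD by simp
    ultimately show ?thesis using False iE by (simp add: lower_part_def)
  qed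
qed

definition fill_strip :: "(nat \<times> nat) set \<Rightarrow> (nat \<times> nat) set \<Rightarrow> (nat \<times> nat) set \<Rightarrow> nat \<Rightarrow> ((nat \<times> nat) \<Rightarrow> nat) \<Rightarrow> ((nat \<times> nat) \<Rightarrow> nat)" where
  "fill_strip D F E v T = (\<lambda>a. if a \<in> F - D then T a else if a \<in> E - F then v else undefined)"

lemma fill_strip_in:
  assumes E: "is_shape E" and F: "is_shape F" and DF: "D \<subseteq> F" and FE: "horiz_strip F E"
    and T: "T \<in> skew_ssyt D F b"
  shows "fill_strip D F E (Suc b) T \<in> skew_ssyt D E (Suc b)"
    and "lower_part D E b (fill_strip D F E (Suc b) T) = F"
proof -
  define T' where "T' = fill_strip D F E (Suc b) T"
  have FsE: "F \<subseteq> E" using FE by (simp add: horiz_strip_def)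
  have val: "\<And>a. a \<in> F - D \<Longrightarrow> 1 \<le> T a \<and> T a \<le> b"
    using skew_ssytD(1)[OF T] by (auto simp: PiE_def Pi_def)
  have Frow: "(i, j) \<in> F" if "(i, j') \<in> F" "j < j'" "1 \<le> j" for i j j'
    using is_shapeD[OF F that(1), of i j] is_shape_pos[OF F that(1)] that by simp
  have Fcol: "(i, j) \<in> F" if c1: "(i', j) \<in> E" and c2: "i < i'" and c3: "1 \<le> i" for i i' j
  proof -
    obtain k where k: "i' = Suc k" using c2 less_imp_Suc_add by blast
    have kF: "(k, j) \<in> F" using FE c1 k c2 c3 unfolding horiz_strip_def by auto
    show ?thesis using is_shapeD[OF F kF, of i j] is_shape_pos[OF F kF] c2 c3 k by simp
  qed
  have Epos: "1 \<le> i \<and> 1 \<le> j" if "(i, j) \<in> E" for i j using is_shape_pos[OF E that] .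
  show "T' \<in> skew_ssyt D E (Suc b)"
    unfolding skew_ssyt_def
  proof (intro CollectI conjI allI impI)
    show "T' \<in> (E - D) \<rightarrow>\<^sub>E {1..Suc b}"
    proof (rule PiE_I)
      fix a assume "a \<in> E - D"
      then show "T' a \<in> {1..Suc b}" using val[of a] unfolding T'_def fill_strip_def by auto
    next
      fix a assume "a \<notin> E - D"
      then show "T' a = undefined" using FsE DF unfolding T'_def fill_strip_def by auto
    qed
  next
    fix i j j' assume a: "(i, j) \<in> E - D \<and> (i, j') \<in> E - D \<and> j < j'"
    show "T' (i, j) \<le> T' (i, j')"
    proof (cases "(i, j') \<in> F")
      case True
      then have "(i, j) \<in> F" using Frow[of i j' j] a Epos[of i j] by blast
      then show ?thesis using skew_ssytD(2)[OF T, of i j j'] a True unfolding T'_def fill_strip_def by auto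
    next
      case False
      then show ?thesis using val[of "(i, j)"] a unfolding T'_def fill_strip_def by auto
    qed
  next
    fix i i' j assume a: "(i, j) \<in> E - D \<and> (i', j) \<in> E - D \<and> i < i'"
    have iF: "(i, j) \<in> F" using Fcol[of i' j i] a Epos[of i j] by blast
    then show "T' (i, j) < T' (i', j)"
      using skew_ssytD(3)[OF T, of i j i'] val[of "(i, j)"] a unfolding T'_def fill_strip_def
      by (cases "(i', j) \<in> F") auto
  qed
  show "lower_part D E b T' = F"
    using val FsE DF unfolding lower_part_def T'_def fill_strip_def by auto
qed

lemma restrict_lower_part_in:
  assumes T: "T \<in> skew_ssyt D E (Suc b)" and F: "lower_part D E b T = F"
  shows "restrict T (F - D) \<in> skew_ssyt D F b"
proof -
  have FD: "F - D \<subseteq> E - D" using F unfolding lower_part_def by auto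
  have v1: "\<And>a. a \<in> E - D \<Longrightarrow> 1 \<le> T a" using skew_ssytD(1)[OF T] by (auto simp: PiE_def Pi_def)
  have v2: "\<And>a. a \<in> F - D \<Longrightarrow> T a \<le> b" using F unfolding lower_part_def by auto
  show ?thesis
    unfolding skew_ssyt_def
  proof (intro CollectI conjI allI impI)
    show "restrict T (F - D) \<in> (F - D) \<rightarrow>\<^sub>E {1..b}" using v1 v2 FD by auto
  next
    fix i j j' assume "(i, j) \<in> F - D \<and> (i, j') \<in> F - D \<and> j < j'"
    then show "restrict T (F - D) (i, j) \<le> restrict T (F - D) (i, j')"
      using skew_ssytD(2)[OF T, of i j j'] FD by auto
  next
    fix i i' j assume "(i, j) \<in> F - D \<and> (i', j) \<in> F - D \<and> i < i'"
    then show "restrict T (F - D) (i, j) < restrict T (F - D) (i', j)"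
      using skew_ssytD(3)[OF T, of i j i'] FD by auto
  qed
qed

lemma skew_ssyt_strip_bij:
  assumes E: "is_shape E" and F: "is_shape F" and DF: "D \<subseteq> F" and FE: "horiz_strip F E"
  shows "bij_betw (fill_strip D F E (Suc b)) (skew_ssyt D F b)
           {T \<in> skew_ssyt D E (Suc b). lower_part D E b T = F}"
proof (rule bij_betw_byWitness[where f' = "\<lambda>T. restrict T (F - D)"])
  have FsE: "F \<subseteq> E" using FE by (simp add: horiz_strip_def)
  show "\<forall>T\<in>skew_ssyt D F b. restrict (fill_strip D F E (Suc b) T) (F - D) = T"
  proof
    fix T assume "T \<in> skew_ssyt D F b"
    then have "T \<in> extensional (F - D)" using skew_ssytD(1) by (simp add: PiE_def)
    then show "restrict (fill_strip D F E (Suc b) T) (F - D) = T"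
      unfolding fill_strip_def restrict_def extensional_def by (auto simp: fun_eq_iff)
  qed
  show "\<forall>T\<in>{T \<in> skew_ssyt D E (Suc b). lower_part D E b T = F}.
          fill_strip D F E (Suc b) (restrict T (F - D)) = T"
  proof (intro ballI ext)
    fix T a assume "T \<in> {T \<in> skew_ssyt D E (Suc b). lower_part D E b T = F}"
    then have TE: "T \<in> (E - D) \<rightarrow>\<^sub>E {1..Suc b}" and lv: "lower_part D E b T = F"
      using skew_ssytD(1) by auto
    have "a \<in> E - F \<Longrightarrow> T a = Suc b"
      using lv DF PiE_mem[OF TE, of a] unfolding lower_part_def by fastforce
    moreover have "a \<notin> E - D \<Longrightarrow> T a = undefined" using TE by (meson PiE_E)
    ultimately show "fill_strip D F E (Suc b) (restrict T (F - D)) a = T a"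
      using FsE unfolding fill_strip_def by auto
  qed
  show "fill_strip D F E (Suc b) ` skew_ssyt D F b \<subseteq> {T \<in> skew_ssyt D E (Suc b). lower_part D E b T = F}"
    using fill_strip_in[OF E F DF FE] by blast
  show "(\<lambda>T. restrict T (F - D)) ` {T \<in> skew_ssyt D E (Suc b). lower_part D E b T = F} \<subseteq> skew_ssyt D F b"
    using restrict_lower_part_in by blast
qed

lemma skew_ssyt_sum_last_strip:
  fixes f :: "nat \<Rightarrow> nat \<times> nat \<Rightarrow> 'a::comm_semiring_1"
  assumes E: "is_shape E" and F: "is_shape F" and DF: "D \<subseteq> F" and FE: "horiz_strip F E"
    and finE: "finite E"
  shows "(\<Sum>T\<in>{T \<in> skew_ssyt D E (Suc b). lower_part D E b T = F}. \<Prod>a\<in>E - D. f (T a) a)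
       = (\<Sum>T\<in>skew_ssyt D F b. \<Prod>a\<in>F - D. f (T a) a) * (\<Prod>a\<in>E - F. f (Suc b) a)"
proof -
  have FsE: "F \<subseteq> E" using FE by (simp add: horiz_strip_def)
  have split: "(\<Prod>a\<in>E - D. f (fill_strip D F E (Suc b) T a) a)
      = (\<Prod>a\<in>F - D. f (T a) a) * (\<Prod>a\<in>E - F. f (Suc b) a)" for T
  proof -
    have EU: "E - D = (F - D) \<union> (E - F)" using DF FsE by auto
    have "(\<Prod>a\<in>E - D. f (fill_strip D F E (Suc b) T a) a)
       = (\<Prod>a\<in>F - D. f (fill_strip D F E (Suc b) T a) a) * (\<Prod>a\<in>E - F. f (fill_strip D F E (Suc b) T a) a)"
      unfolding EU by (rule prod.union_disjoint) (use finE FsE in \<open>auto intro: finite_subset\<close>)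
    then show ?thesis
      unfolding fill_strip_def by (auto intro!: arg_cong2[where f = "(*)"] prod.cong)
  qed
  have "(\<Sum>T\<in>{T \<in> skew_ssyt D E (Suc b). lower_part D E b T = F}. \<Prod>a\<in>E - D. f (T a) a)
      = (\<Sum>T\<in>skew_ssyt D F b. \<Prod>a\<in>E - D. f (fill_strip D F E (Suc b) T a) a)"
    by (rule sum.reindex_bij_betw[OF skew_ssyt_strip_bij[OF E F DF FE], symmetric])
  also have "\<dots> = (\<Sum>T\<in>skew_ssyt D F b. (\<Prod>a\<in>F - D. f (T a) a) * (\<Prod>a\<in>E - F. f (Suc b) a))"
    by (simp only: split)
  also have "\<dots> = (\<Sum>T\<in>skew_ssyt D F b. \<Prod>a\<in>F - D. f (T a) a) * (\<Prod>a\<in>E - F. f (Suc b) a)"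
    by (simp add: sum_distrib_right)
  finally show ?thesis .
qed

text \<open>Tableau sums are chain sums: the entry m is placed by the m-th operator of the chain.\<close>
theorem skew_ssyt_chain_sum:
  assumes L: "finite L" and D: "D \<in> shapes_in L" and E: "E \<in> shapes_in L" and DE: "D \<subseteq> E"
  shows "(\<Sum>T\<in>skew_ssyt D E b. \<Prod>a\<in>E - D. f (T a) a) = chain_sum L (map f [1..<Suc b]) D E"
  using E DE
proof (induction b arbitrary: E)
  case 0
  have "skew_ssyt D E 0 = (if E = D then {\<lambda>_. undefined} else {})"
    using 0 unfolding skew_ssyt_def by (auto simp: PiE_def Pi_def)
  then show ?case by simp
next
  case (Suc b)
  have Esh: "is_shape E" and Dsh: "is_shape D" and finE: "finite E"
    using Suc.prems D L by (auto simp: shapes_in_def intro: finite_subset)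
  let ?w = "\<lambda>T. \<Prod>a\<in>E - D. f (T a) a"
  have level: "(\<Sum>T\<in>{T \<in> skew_ssyt D E (Suc b). lower_part D E b T = F}. ?w T)
      = chain_sum L (map f [1..<Suc b]) D F * strip_weight (f (Suc b)) F E" if F: "F \<in> shapes_in L" for F
  proof (cases "D \<subseteq> F \<and> horiz_strip F E")
    case True
    have "is_shape F" using F by (simp add: shapes_in_def)
    then show ?thesis
      using skew_ssyt_sum_last_strip[OF Esh _ _ _ finE, where F=F and D=D and b=b and f=f] Suc.IH[OF F] True
      by (simp add: strip_weight_def del: upt_Suc)
  next
    case False
    have empty: "{T \<in> skew_ssyt D E (Suc b). lower_part D E b T = F} = {}"
      using lower_part_strip[OF Dsh Esh Suc.prems(2)] False by (auto simp: lower_part_def)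
    show ?thesis by (simp only: empty chain_sum_strip_zero[OF False] sum.empty)
  qed
  have "(\<Sum>T\<in>skew_ssyt D E (Suc b). ?w T)
      = (\<Sum>F\<in>shapes_in L. \<Sum>T\<in>{T \<in> skew_ssyt D E (Suc b). lower_part D E b T = F}. ?w T)"
  proof (rule sum.group[symmetric])
    show "lower_part D E b ` skew_ssyt D E (Suc b) \<subseteq> shapes_in L"
      using lower_part_shape[OF Dsh Esh Suc.prems(2)] Suc.prems(1) D
      by (auto simp: shapes_in_def lower_part_def)
  qed (use finite_skew_ssyt[OF finE] finite_shapes_in[OF L] in auto)
  also have "\<dots> = (\<Sum>F\<in>shapes_in L. chain_sum L (map f [1..<Suc b]) D F * strip_weight (f (Suc b)) F E)"
    using level by simp
  also have "\<dots> = chain_sum L (map f [1..<Suc b] @ [f (Suc b)]) D E"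
    unfolding chain_sum_append[OF L D, of "map f [1..<Suc b]" "[f (Suc b)]" E]
    by (simp only: chain_sum_single[OF L Suc.prems(1)])
  also have "\<dots> = chain_sum L (map f [1..<Suc (Suc b)]) D E"
    by simp
  finally show ?case .
qed

section \<open>Shapes described by their row lengths\<close>

definition row_len :: "(nat \<times> nat) set \<Rightarrow> nat \<Rightarrow> nat" where
  "row_len D i = card {j. (i, j) \<in> D}"

definition rows_shape :: "nat \<Rightarrow> (nat \<Rightarrow> nat) \<Rightarrow> (nat \<times> nat) set" where
  "rows_shape R s = {(i, j). 1 \<le> i \<and> i \<le> R \<and> 1 \<le> j \<and> j \<le> s i}"

lemma shape_by_rows:
  assumes L: "finite L" "\<forall>(i, j)\<in>L. i \<le> R" and D: "D \<in> shapes_in L"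
  shows "(i, j) \<in> D \<longleftrightarrow> 1 \<le> i \<and> i \<le> R \<and> 1 \<le> j \<and> j \<le> row_len D i"
proof -
  have Dsh: "is_shape D" "D \<subseteq> L" using D by (auto simp: shapes_in_def)
  define S where "S = {j. (i, j) \<in> D}"
  have finS: "finite S"
  proof -
    have "S \<subseteq> snd ` L" unfolding S_def using Dsh(2) by force
    then show ?thesis using L(1) finite_subset by blast
  qed
  show ?thesis
  proof
    assume ij: "(i, j) \<in> D"
    have pos: "1 \<le> i" "1 \<le> j" using is_shape_pos[OF Dsh(1) ij] by auto
    have "i \<le> R" using ij Dsh(2) L(2) by blast
    moreover have "{1..j} \<subseteq> S"
      unfolding S_def using is_shapeD[OF Dsh(1) ij, of i] pos by auto
    then have "j \<le> card S" using card_mono[OF finS] by (metis card_atLeastAtMost diff_Suc_1)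
    ultimately show "1 \<le> i \<and> i \<le> R \<and> 1 \<le> j \<and> j \<le> row_len D i"
      using pos by (simp add: row_len_def S_def)
  next
    assume a: "1 \<le> i \<and> i \<le> R \<and> 1 \<le> j \<and> j \<le> row_len D i"
    show "(i, j) \<in> D"
    proof (rule ccontr)
      assume nij: "(i, j) \<notin> D"
      have "S \<subseteq> {1..<j}"
      proof
        fix j' assume "j' \<in> S"
        then have j'D: "(i, j') \<in> D" by (simp add: S_def)
        have "\<not> j \<le> j'" using is_shapeD[OF Dsh(1) j'D, of i j] a nij by auto
        then show "j' \<in> {1..<j}" using is_shape_pos[OF Dsh(1) j'D] by simp
      qed
      then have "card S \<le> j - 1" using card_mono[of "{1..<j}" S] by simp
      then show False using a unfolding row_len_def S_def by linarith
    qed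
  qed
qed

lemma row_len_last:
  assumes L: "finite L" "\<forall>(i, j)\<in>L. i \<le> R" and D: "D \<in> shapes_in L" and r: "1 \<le> row_len D i"
  shows "(i, row_len D i) \<in> D"
proof -
  have "{j. (i, j) \<in> D} \<noteq> {}" using r unfolding row_len_def by (metis card.empty not_one_le_zero)
  then obtain j0 where "(i, j0) \<in> D" by auto
  then have "1 \<le> i \<and> i \<le> R" using shape_by_rows[OF L D] by blast
  then show ?thesis using shape_by_rows[OF L D, of i "row_len D i"] r by simp
qed

lemma row_len_beyond:
  assumes L: "finite L" "\<forall>(i, j)\<in>L. i \<le> R" and D: "D \<in> shapes_in L" and i: "R < i"
  shows "row_len D i = 0"
  using row_len_last[OF L D, of i] shape_by_rows[OF L D, of i] i by (metis less_one not_le)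

lemma row_len_rows_shape: "1 \<le> i \<Longrightarrow> i \<le> R \<Longrightarrow> row_len (rows_shape R s) i = s i"
proof -
  assume "1 \<le> i" "i \<le> R"
  then have "{j. (i, j) \<in> rows_shape R s} = {1..s i}" unfolding rows_shape_def by auto
  then show ?thesis unfolding row_len_def by simp
qed

lemma antimono_upto:
  assumes "\<And>k. 1 \<le> k \<Longrightarrow> Suc k \<le> R \<Longrightarrow> f (Suc k) \<le> f k" "1 \<le> i'" "i' \<le> i" "i \<le> R"
  shows "f i \<le> (f i' :: nat)"
  using assms(3,4)
proof (induction i)
  case 0 then show ?case using assms(2) by simp
next
  case (Suc i)
  show ?case
  proof (cases "i' = Suc i")
    case False
    then have "i' \<le> i" using Suc.prems by simp
    then show ?thesis using Suc assms(1)[of i] assms(2) by fastforce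
  qed simp
qed

text \<open>
  Bounds for the length of row i of a shape F such that F/D and E/F are horizontal strips,
  d and e being the row lengths of D and E: the strips interlace the rows.\<close>
definition row_lo :: "(nat \<Rightarrow> nat) \<Rightarrow> (nat \<Rightarrow> nat) \<Rightarrow> nat \<Rightarrow> nat" where
  "row_lo d e i = max (d i) (e (Suc i))"

definition row_hi :: "(nat \<Rightarrow> nat) \<Rightarrow> (nat \<Rightarrow> nat) \<Rightarrow> nat \<Rightarrow> nat" where
  "row_hi d e i = (if i = 1 then e 1 else min (e i) (d (i - 1)))"

lemma rows_shape_between:
  assumes L: "finite L" "\<forall>(i, j)\<in>L. i \<le> R" and D: "D \<in> shapes_in L" and E: "E \<in> shapes_in L"
    and s: "s \<in> PiE {1..R} (\<lambda>i. {row_lo (row_len D) (row_len E) i..row_hi (row_len D) (row_len E) i})"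
  shows "rows_shape R s \<in> shapes_in L" "horiz_strip D (rows_shape R s)" "horiz_strip (rows_shape R s) E"
proof -
  define F where "F = rows_shape R s"
  note mD = shape_by_rows[OF L D] and mE = shape_by_rows[OF L E]
  have sb: "row_lo (row_len D) (row_len E) i \<le> s i \<and> s i \<le> row_hi (row_len D) (row_len E) i"
    if "1 \<le> i" "i \<le> R" for i
    using s that by (auto simp: PiE_def Pi_def)
  have dec: "s (Suc k) \<le> s k" if "1 \<le> k" "Suc k \<le> R" for k
    using sb[of "Suc k"] sb[of k] that unfolding row_lo_def row_hi_def by simp
  have FE: "F \<subseteq> E"
  proof
    fix a assume "a \<in> F"
    then obtain i j where a: "a = (i, j)" "1 \<le> i" "i \<le> R" "1 \<le> j" "j \<le> s i"
      unfolding F_def rows_shape_def by auto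
    have "s i \<le> row_len E i" using sb[of i] a unfolding row_hi_def by (auto split: if_splits)
    then show "a \<in> E" using mE a by simp
  qed
  have "is_shape F"
    unfolding is_shape_def F_def rows_shape_def
  proof (intro conjI allI impI)
    fix i j i' j' assume "(i, j) \<in> {(i, j). 1 \<le> i \<and> i \<le> R \<and> 1 \<le> j \<and> j \<le> s i} \<and> 1 \<le> i' \<and> i' \<le> i \<and> 1 \<le> j' \<and> j' \<le> j"
    moreover have "s i \<le> s i'" if "1 \<le> i'" "i' \<le> i" "i \<le> R"
      using antimono_upto[of R s i' i] dec that by blast
    ultimately show "(i', j') \<in> {(i, j). 1 \<le> i \<and> i \<le> R \<and> 1 \<le> j \<and> j \<le> s i}" by auto
  qed auto
  then show "rows_shape R s \<in> shapes_in L" using FE E by (auto simp: shapes_in_def F_def)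
  show "horiz_strip D (rows_shape R s)"
    unfolding horiz_strip_def F_def[symmetric]
  proof (intro conjI allI impI subsetI)
    fix a assume "a \<in> D"
    then obtain i j where a: "a = (i, j)" "1 \<le> i" "i \<le> R" "1 \<le> j" "j \<le> row_len D i"
      using mD by (cases a) blast
    then show "a \<in> F" using sb[of i] unfolding F_def rows_shape_def row_lo_def by auto
  next
    fix i j assume a: "(Suc i, j) \<in> F \<and> 1 \<le> i"
    then have "1 \<le> j" "j \<le> s (Suc i)" "Suc i \<le> R" unfolding F_def rows_shape_def by auto
    moreover have "s (Suc i) \<le> row_len D i" using sb[of "Suc i"] a \<open>Suc i \<le> R\<close> unfolding row_hi_def by simp
    ultimately show "(i, j) \<in> D" using mD a by simp
  qed
  show "horiz_strip (rows_shape R s) E"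
    unfolding horiz_strip_def F_def[symmetric]
  proof (intro conjI allI impI FE)
    fix i j assume a: "(Suc i, j) \<in> E \<and> 1 \<le> i"
    then have "1 \<le> j" "j \<le> row_len E (Suc i)" "Suc i \<le> R" using mE by auto
    moreover have "row_len E (Suc i) \<le> s i" using sb[of i] a \<open>Suc i \<le> R\<close> unfolding row_lo_def by simp
    ultimately show "(i, j) \<in> F" unfolding F_def rows_shape_def using a by simp
  qed
qed

lemma between_rows_shape:
  assumes L: "finite L" "\<forall>(i, j)\<in>L. i \<le> R" and D: "D \<in> shapes_in L" and E: "E \<in> shapes_in L"
    and F: "F \<in> shapes_in L" "horiz_strip D F" "horiz_strip F E"
  shows "restrict (row_len F) {1..R} \<in> PiE {1..R} (\<lambda>i. {row_lo (row_len D) (row_len E) i..row_hi (row_len D) (row_len E) i})"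
    and "rows_shape R (restrict (row_len F) {1..R}) = F"
proof -
  define d e f where "d = row_len D" and "e = row_len E" and "f = row_len F"
  note mD = shape_by_rows[OF L D, folded d_def] and mE = shape_by_rows[OF L E, folded e_def]
    and mF = shape_by_rows[OF L F(1), folded f_def]
  have last: "(i, d i) \<in> D" "(i, e i) \<in> E" "(i, f i) \<in> F"
    if "d i \<noteq> 0" "e i \<noteq> 0" "f i \<noteq> 0" for i
    using row_len_last[OF L D, of i] row_len_last[OF L E, of i] row_len_last[OF L F(1), of i] that
    unfolding d_def e_def f_def by auto
  have DF: "D \<subseteq> F" and FE: "F \<subseteq> E" using F unfolding horiz_strip_def by auto
  show "restrict (row_len F) {1..R} \<in> PiE {1..R} (\<lambda>i. {row_lo (row_len D) (row_len E) i..row_hi (row_len D) (row_len E) i})"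
    unfolding d_def[symmetric] e_def[symmetric] f_def[symmetric]
  proof (rule restrict_PiE_iff[THEN iffD2], intro ballI)
    fix i assume i: "i \<in> {1..R}"
    have "d i \<le> f i"
    proof (cases "d i = 0")
      case False
      then have "(i, d i) \<in> D" using row_len_last[OF L D, of i] unfolding d_def by simp
      then show ?thesis using DF mF by blast
    qed simp
    moreover have "e (Suc i) \<le> f i"
    proof (cases "e (Suc i) = 0")
      case False
      then have "(Suc i, e (Suc i)) \<in> E" using row_len_last[OF L E, of "Suc i"] unfolding e_def by simp
      then have "(i, e (Suc i)) \<in> F" using F(3) i unfolding horiz_strip_def by simp
      then show ?thesis using mF by blast
    qed simp
    moreover have "f i \<le> e i"
    proof (cases "f i = 0")
      case False
      then have "(i, f i) \<in> F" using row_len_last[OF L F(1), of i] unfolding f_def by simp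
      then show ?thesis using FE mE by blast
    qed simp
    moreover have "f i \<le> d (i - 1)" if i1: "i \<noteq> 1"
    proof (cases "f i = 0")
      case False
      then have fF: "(i, f i) \<in> F" using row_len_last[OF L F(1), of i] unfolding f_def by simp
      obtain k where k: "i = Suc k" "1 \<le> k" using i i1 by (cases i) auto
      have "(k, f i) \<in> D" using F(2) fF k unfolding horiz_strip_def by blast
      then show ?thesis using mD k by simp
    qed simp
    ultimately show "f i \<in> {row_lo d e i..row_hi d e i}" unfolding row_lo_def row_hi_def by auto
  qed
  show "rows_shape R (restrict (row_len F) {1..R}) = F"
    unfolding rows_shape_def f_def[symmetric] using mF by auto
qed

lemma rows_shape_bij:
  assumes L: "finite L" "\<forall>(i, j)\<in>L. i \<le> R" and D: "D \<in> shapes_in L" and E: "E \<in> shapes_in L"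
  defines "PI \<equiv> PiE {1..R} (\<lambda>i. {row_lo (row_len D) (row_len E) i..row_hi (row_len D) (row_len E) i})"
    and "V \<equiv> {F \<in> shapes_in L. horiz_strip D F \<and> horiz_strip F E}"
  shows "bij_betw (rows_shape R) PI V"
proof (rule bij_betw_imageI)
  show "inj_on (rows_shape R) PI"
  proof (rule inj_onI, rule ext)
    fix s s' i assume s: "s \<in> PI" "s' \<in> PI" and eq: "rows_shape R s = rows_shape R s'"
    show "s i = s' i"
    proof (cases "i \<in> {1..R}")
      case True
      then show ?thesis using row_len_rows_shape[of i R s] row_len_rows_shape[of i R s'] eq by simp
    next
      case False
      then show ?thesis using s unfolding PI_def by (simp add: PiE_def extensional_def)
    qed
  qed
  show "rows_shape R ` PI = V"
  proof
    show "rows_shape R ` PI \<subseteq> V"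
      using rows_shape_between[OF L D E] unfolding V_def PI_def by blast
    show "V \<subseteq> rows_shape R ` PI"
    proof
      fix F assume "F \<in> V"
      then have F: "F \<in> shapes_in L" "horiz_strip D F" "horiz_strip F E" by (simp_all add: V_def)
      have "restrict (row_len F) {1..R} \<in> PI"
        using between_rows_shape(1)[OF L D E F] unfolding PI_def .
      then show "F \<in> rows_shape R ` PI"
        using between_rows_shape(2)[OF L D E F] by (metis image_eqI)
    qed
  qed
qed

text \<open>
  Two consecutive strip operators factor over the rows: the intermediate shape is chosen
  independently in each row, between the bounds row_lo and row_hi.\<close>
lemma strip_pair_rows:
  fixes g1 g2 :: "nat \<times> nat \<Rightarrow> 'a::comm_ring_1"
  assumes L: "finite L" "\<forall>(i, j)\<in>L. i \<le> R" and D: "D \<in> shapes_in L" and E: "E \<in> shapes_in L"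
  defines "d \<equiv> row_len D" and "e \<equiv> row_len E"
  shows "(\<Sum>F\<in>shapes_in L. strip_weight g1 D F * strip_weight g2 F E) =
    (\<Prod>i\<in>{1..R}. \<Sum>t\<in>{row_lo d e i..row_hi d e i}. (\<Prod>j\<in>{d i<..t}. g1 (i, j)) * (\<Prod>j\<in>{t<..e i}. g2 (i, j)))"
proof -
  note mD = shape_by_rows[OF L D, folded d_def] and mE = shape_by_rows[OF L E, folded e_def]
  define V where "V = {F \<in> shapes_in L. horiz_strip D F \<and> horiz_strip F E}"
  define PI where "PI = PiE {1..R} (\<lambda>i. {row_lo d e i..row_hi d e i})"
  define w where "w = (\<lambda>F. (\<Prod>a\<in>F - D. g1 a) * (\<Prod>a\<in>E - F. g2 a))"
  have bij: "bij_betw (rows_shape R) PI V"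
    unfolding PI_def V_def d_def e_def by (rule rows_shape_bij[OF L D E])
  have prod_rows: "w (rows_shape R s) =
      (\<Prod>i\<in>{1..R}. (\<Prod>j\<in>{d i<..s i}. g1 (i, j)) * (\<Prod>j\<in>{s i<..e i}. g2 (i, j)))" if "s \<in> PI" for s
  proof -
    have "rows_shape R s - D = (SIGMA i:{1..R}. {d i<..s i})"
      unfolding rows_shape_def using mD by auto
    moreover have "E - rows_shape R s = (SIGMA i:{1..R}. {s i<..e i})"
      unfolding rows_shape_def using mE by auto
    moreover have "prod g1 (SIGMA i:{1..R}. {d i<..s i}) = (\<Prod>i\<in>{1..R}. \<Prod>j\<in>{d i<..s i}. g1 (i, j))"
      by (subst prod.Sigma) auto
    moreover have "prod g2 (SIGMA i:{1..R}. {s i<..e i}) = (\<Prod>i\<in>{1..R}. \<Prod>j\<in>{s i<..e i}. g2 (i, j))"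
      by (subst prod.Sigma) auto
    ultimately show ?thesis
      unfolding w_def prod.distrib by simp
  qed
  have "(\<Sum>F\<in>shapes_in L. strip_weight g1 D F * strip_weight g2 F E)
      = (\<Sum>F\<in>shapes_in L. if horiz_strip D F \<and> horiz_strip F E then w F else 0)"
    unfolding strip_weight_def w_def by (rule sum.cong) auto
  also have "\<dots> = (\<Sum>F\<in>V. w F)"
    unfolding V_def
    using sum.inter_filter[OF finite_shapes_in[OF L(1)], of w "\<lambda>F. horiz_strip D F \<and> horiz_strip F E"]
    by simp
  also have "\<dots> = (\<Sum>s\<in>PI. w (rows_shape R s))"
    by (rule sum.reindex_bij_betw[OF bij, symmetric])
  also have "\<dots> = (\<Sum>s\<in>PI. \<Prod>i\<in>{1..R}. (\<Prod>j\<in>{d i<..s i}. g1 (i, j)) * (\<Prod>j\<in>{s i<..e i}. g2 (i, j)))"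
    by (rule sum.cong) (simp_all add: prod_rows)
  also have "\<dots> = (\<Prod>i\<in>{1..R}. \<Sum>t\<in>{row_lo d e i..row_hi d e i}. (\<Prod>j\<in>{d i<..t}. g1 (i, j)) * (\<Prod>j\<in>{t<..e i}. g2 (i, j)))"
    unfolding PI_def by (rule prod_sum_PiE[symmetric]) auto
  finally show ?thesis .
qed

section \<open>The exchange relation for two strip operators\<close>

lemma gtAtMost_Suc: "m \<le> n \<Longrightarrow> {m<..Suc n} = insert (Suc n) {m<..n}"
  by auto

text \<open>
  The one-row identity behind the exchange relation, proved together with a telescoping
  formula for the difference of the two products over a segment.\<close>
lemma row_exchange_telescope:
  fixes g :: "nat \<Rightarrow> 'a::comm_ring_1"
  shows "(\<Sum>t\<in>{A..A+L}. (\<Prod>j\<in>{A<..t}. y + g j) * (\<Prod>j\<in>{t<..A+L}. g (Suc j)))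
       = (\<Sum>t\<in>{A..A+L}. (\<Prod>j\<in>{A<..t}. g j) * (\<Prod>j\<in>{t<..A+L}. y + g (Suc j)))
     \<and> (\<Prod>j\<in>{A<..Suc (A+L)}. y + g j) - (\<Prod>j\<in>{A<..Suc (A+L)}. g j)
       = y * (\<Sum>t\<in>{A..A+L}. (\<Prod>j\<in>{A<..t}. g j) * (\<Prod>j\<in>{t<..A+L}. y + g (Suc j)))"
proof (induction L)
  case 0
  have "{A<..Suc A} = {Suc A}" by auto
  then show ?case by simp
next
  case (Suc L)
  define M where "M = A + L"
  define S1 where "S1 = (\<Sum>t\<in>{A..M}. (\<Prod>j\<in>{A<..t}. y + g j) * (\<Prod>j\<in>{t<..M}. g (Suc j)))"
  define S2 where "S2 = (\<Sum>t\<in>{A..M}. (\<Prod>j\<in>{A<..t}. g j) * (\<Prod>j\<in>{t<..M}. y + g (Suc j)))"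
  define Py where "Py = (\<Prod>j\<in>{A<..Suc M}. y + g j)"
  define Pg where "Pg = (\<Prod>j\<in>{A<..Suc M}. g j)"
  have IH: "S1 = S2" "Py - Pg = y * S2"
    using Suc.IH unfolding S1_def S2_def Py_def Pg_def M_def by auto
  have Py: "Py = Pg + y * S2" using IH(2) by (simp add: algebra_simps)
  have AM: "A \<le> Suc M" "A \<le> M" unfolding M_def by auto
  have e0: "{Suc M<..Suc M} = {}" by auto
  have r1: "(\<Sum>t\<in>{A..Suc M}. (\<Prod>j\<in>{A<..t}. y + g j) * (\<Prod>j\<in>{t<..Suc M}. g (Suc j)))
      = S1 * g (Suc (Suc M)) + Py"
  proof -
    have "(\<Sum>t\<in>{A..M}. (\<Prod>j\<in>{A<..t}. y + g j) * (\<Prod>j\<in>{t<..Suc M}. g (Suc j)))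
       = (\<Sum>t\<in>{A..M}. (\<Prod>j\<in>{A<..t}. y + g j) * (\<Prod>j\<in>{t<..M}. g (Suc j)) * g (Suc (Suc M)))"
      by (rule sum.cong) (auto simp: gtAtMost_Suc mult.commute mult.left_commute)
    then show ?thesis
      unfolding atLeastAtMostSuc_conv[OF AM(1)] S1_def Py_def
      by (simp add: e0 sum_distrib_right add.commute)
  qed
  have r2: "(\<Sum>t\<in>{A..Suc M}. (\<Prod>j\<in>{A<..t}. g j) * (\<Prod>j\<in>{t<..Suc M}. y + g (Suc j)))
      = S2 * (y + g (Suc (Suc M))) + Pg"
  proof -
    have "(\<Sum>t\<in>{A..M}. (\<Prod>j\<in>{A<..t}. g j) * (\<Prod>j\<in>{t<..Suc M}. y + g (Suc j)))
       = (\<Sum>t\<in>{A..M}. (\<Prod>j\<in>{A<..t}. g j) * (\<Prod>j\<in>{t<..M}. y + g (Suc j)) * (y + g (Suc (Suc M))))"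
      by (rule sum.cong) (auto simp: gtAtMost_Suc mult.commute mult.left_commute)
    then show ?thesis
      unfolding atLeastAtMostSuc_conv[OF AM(1)] S2_def Pg_def
      by (simp add: e0 sum_distrib_right add.commute)
  qed
  have r3: "(\<Prod>j\<in>{A<..Suc (Suc M)}. y + g j) = Py * (y + g (Suc (Suc M)))"
    unfolding Py_def using AM by (simp add: gtAtMost_Suc mult.commute)
  have r4: "(\<Prod>j\<in>{A<..Suc (Suc M)}. g j) = Pg * g (Suc (Suc M))"
    unfolding Pg_def using AM by (simp add: gtAtMost_Suc mult.commute)
  have eq: "A + Suc L = Suc M" unfolding M_def by simp
  have c1: "S1 * g (Suc (Suc M)) + Py = S2 * (y + g (Suc (Suc M))) + Pg"
    unfolding Py IH(1) by (simp add: algebra_simps)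
  have c2: "Py * (y + g (Suc (Suc M))) - Pg * g (Suc (Suc M)) = y * (S2 * (y + g (Suc (Suc M))) + Pg)"
    unfolding Py by (simp add: algebra_simps)
  show ?case unfolding eq r1 r2 r3 r4 using c1 c2 by simp
qed

lemma row_exchange:
  fixes g :: "nat \<Rightarrow> 'a::comm_ring_1"
  shows "(\<Sum>t\<in>{A..B}. (\<Prod>j\<in>{A<..t}. y + g j) * (\<Prod>j\<in>{t<..B}. g (Suc j)))
       = (\<Sum>t\<in>{A..B}. (\<Prod>j\<in>{A<..t}. g j) * (\<Prod>j\<in>{t<..B}. y + g (Suc j)))"
proof (cases "A \<le> B")
  case True
  then show ?thesis using row_exchange_telescope[where A=A and L="B - A" and y=y and g=g] by simp
qed simp

lemma prod_split_ivl:
  fixes f :: "nat \<Rightarrow> 'a::comm_monoid_mult"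
  assumes "a \<le> b" "b \<le> c"
  shows "prod f {a<..c} = prod f {a<..b} * prod f {b<..c}"
proof -
  have "{a<..c} = {a<..b} \<union> {b<..c}" using assms by auto
  then show ?thesis by (simp add: prod.union_disjoint ivl_disj_int)
qed

lemma row_sum_factor:
  fixes f g :: "nat \<Rightarrow> 'a::comm_ring_1"
  assumes "d \<le> A" "B \<le> e"
  shows "(\<Sum>t\<in>{A..B}. (\<Prod>j\<in>{d<..t}. f j) * (\<Prod>j\<in>{t<..e}. g j))
       = (\<Prod>j\<in>{d<..A}. f j) * (\<Sum>t\<in>{A..B}. (\<Prod>j\<in>{A<..t}. f j) * (\<Prod>j\<in>{t<..B}. g j)) * (\<Prod>j\<in>{B<..e}. g j)"
  unfolding sum_distrib_left sum_distrib_right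
proof (rule sum.cong)
  fix t assume t: "t \<in> {A..B}"
  have "(\<Prod>j\<in>{d<..t}. f j) = (\<Prod>j\<in>{d<..A}. f j) * (\<Prod>j\<in>{A<..t}. f j)"
    by (rule prod_split_ivl) (use assms t in auto)
  moreover have "(\<Prod>j\<in>{t<..e}. g j) = (\<Prod>j\<in>{t<..B}. g j) * (\<Prod>j\<in>{B<..e}. g j)"
    by (rule prod_split_ivl) (use assms t in auto)
  ultimately show "(\<Prod>j\<in>{d<..t}. f j) * (\<Prod>j\<in>{t<..e}. g j)
      = (\<Prod>j\<in>{d<..A}. f j) * ((\<Prod>j\<in>{A<..t}. f j) * (\<Prod>j\<in>{t<..B}. g j)) * (\<Prod>j\<in>{B<..e}. g j)"
    by (simp only: mult.assoc)
qed simp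

lemma prod_shift_row:
  fixes p q :: "nat \<Rightarrow> 'a::comm_monoid_mult"
  assumes "\<And>i. 1 \<le> i \<Longrightarrow> p i = q (Suc i)" "q 1 = 1" "p R = 1"
  shows "(\<Prod>i\<in>{1..R}. q i) = (\<Prod>i\<in>{1..R}. p i)"
proof (cases R)
  case (Suc R')
  have "(\<Prod>i\<in>{1..Suc R'}. q i) = q 1 * (\<Prod>i\<in>{Suc 1..Suc R'}. q i)"
    by (rule prod.atLeast_Suc_atMost) simp
  also have "\<dots> = (\<Prod>i\<in>{1..R'}. q (Suc i))"
    using assms(2) by (simp only: prod.shift_bounds_cl_Suc_ivl) simp
  also have "\<dots> = (\<Prod>i\<in>{1..R'}. p i)" using assms(1) by simp
  also have "\<dots> = (\<Prod>i\<in>{1..Suc R'}. p i)" using assms(3) Suc by (simp add: atLeastAtMostSuc_conv)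
  finally show ?thesis using Suc by simp
qed simp

text \<open>
  The exchange relation in terms of row lengths: the row factors left of row_lo and right of
  row_hi are passed on between consecutive rows, and the middle factors are exchanged row by row.\<close>
lemma rows_exchange:
  fixes H :: "int \<Rightarrow> 'a::comm_ring_1" and d e :: "nat \<Rightarrow> nat"
  assumes eR: "e (Suc R) = 0"
  shows "(\<Prod>i\<in>{1..R}. \<Sum>t\<in>{row_lo d e i..row_hi d e i}.
            (\<Prod>j\<in>{d i<..t}. y + H (int j - int i)) * (\<Prod>j\<in>{t<..e i}. H (int j - int i + 1)))
       = (\<Prod>i\<in>{1..R}. \<Sum>t\<in>{row_lo d e i..row_hi d e i}.
            (\<Prod>j\<in>{d i<..t}. H (int j - int i)) * (\<Prod>j\<in>{t<..e i}. y + H (int j - int i + 1)))"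
proof -
  define A B where "A = row_lo d e" and "B = row_hi d e"
  define P where "P i = (\<Prod>j\<in>{d i<..A i}. y + H (int j - int i))" for i
  define P' where "P' i = (\<Prod>j\<in>{d i<..A i}. H (int j - int i))" for i
  define Q where "Q i = (\<Prod>j\<in>{B i<..e i}. H (int j - int i + 1))" for i
  define Q' where "Q' i = (\<Prod>j\<in>{B i<..e i}. y + H (int j - int i + 1))" for i
  define G where "G i = (\<Sum>t\<in>{A i..B i}. (\<Prod>j\<in>{A i<..t}. y + H (int j - int i)) * (\<Prod>j\<in>{t<..B i}. H (int j - int i + 1)))" for i
  define G' where "G' i = (\<Sum>t\<in>{A i..B i}. (\<Prod>j\<in>{A i<..t}. H (int j - int i)) * (\<Prod>j\<in>{t<..B i}. y + H (int j - int i + 1)))" for i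
  have dA: "d i \<le> A i" and Be: "B i \<le> e i" for i unfolding A_def B_def row_lo_def row_hi_def by auto
  have GG: "G i = G' i" for i
  proof -
    have "H (int (Suc j) - int i) = H (int j - int i + 1)" for j
      by (simp add: algebra_simps)
    then show ?thesis
      unfolding G_def G'_def using row_exchange[where A="A i" and B="B i" and y=y and g="\<lambda>j. H (int j - int i)"] by simp
  qed
  have boundary: "{d i<..A i} = {B (Suc i)<..e (Suc i)}" if "1 \<le> i" for i
    unfolding A_def B_def row_lo_def row_hi_def using that by auto
  have PQ': "(\<Prod>i\<in>{1..R}. Q' i) = (\<Prod>i\<in>{1..R}. P i)"
  proof (rule prod_shift_row)
    show "P i = Q' (Suc i)" if "1 \<le> i" for i
      unfolding P_def Q'_def boundary[OF that] by (rule prod.cong) (auto simp: algebra_simps)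
    show "Q' 1 = 1" unfolding Q'_def B_def row_hi_def by simp
    show "P R = 1" unfolding P_def A_def row_lo_def using eR by simp
  qed
  have P'Q: "(\<Prod>i\<in>{1..R}. Q i) = (\<Prod>i\<in>{1..R}. P' i)"
  proof (rule prod_shift_row)
    show "P' i = Q (Suc i)" if "1 \<le> i" for i
      unfolding P'_def Q_def boundary[OF that] by (rule prod.cong) (auto simp: algebra_simps)
    show "Q 1 = 1" unfolding Q_def B_def row_hi_def by simp
    show "P' R = 1" unfolding P'_def A_def row_lo_def using eR by simp
  qed
  have "(\<Prod>i\<in>{1..R}. \<Sum>t\<in>{A i..B i}. (\<Prod>j\<in>{d i<..t}. y + H (int j - int i)) * (\<Prod>j\<in>{t<..e i}. H (int j - int i + 1)))
      = (\<Prod>i\<in>{1..R}. P i * G i * Q i)"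
    unfolding P_def G_def Q_def by (rule prod.cong[OF refl], rule row_sum_factor[OF dA Be])
  also have "\<dots> = (\<Prod>i\<in>{1..R}. P i) * (\<Prod>i\<in>{1..R}. G' i) * (\<Prod>i\<in>{1..R}. Q i)"
    by (simp add: prod.distrib GG)
  also have "\<dots> = (\<Prod>i\<in>{1..R}. P' i) * (\<Prod>i\<in>{1..R}. G' i) * (\<Prod>i\<in>{1..R}. Q' i)"
    unfolding PQ'[symmetric] P'Q by (simp only: ac_simps)
  also have "\<dots> = (\<Prod>i\<in>{1..R}. P' i * G' i * Q' i)"
    by (simp only: prod.distrib)
  also have "\<dots> = (\<Prod>i\<in>{1..R}. \<Sum>t\<in>{A i..B i}. (\<Prod>j\<in>{d i<..t}. H (int j - int i)) * (\<Prod>j\<in>{t<..e i}. y + H (int j - int i + 1)))"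
    unfolding P'_def G'_def Q'_def by (rule prod.cong[OF refl], rule row_sum_factor[OF dA Be, symmetric])
  finally show ?thesis unfolding A_def B_def .
qed

theorem strip_weights_exchange:
  fixes H :: "int \<Rightarrow> 'a::comm_ring_1"
  assumes L: "finite L" "\<forall>(i, j)\<in>L. i \<le> R" and D: "D \<in> shapes_in L" and E: "E \<in> shapes_in L"
  shows "(\<Sum>F\<in>shapes_in L. strip_weight (\<lambda>a. y + H (content a)) D F * strip_weight (\<lambda>a. H (content a + 1)) F E)
       = (\<Sum>F\<in>shapes_in L. strip_weight (\<lambda>a. H (content a)) D F * strip_weight (\<lambda>a. y + H (content a + 1)) F E)"
  unfolding strip_pair_rows[OF L D E]
  using rows_exchange[where d="row_len D" and e="row_len E" and R=R and y=y and H=H,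
      OF row_len_beyond[OF L E, of "Suc R"]]
  by (simp add: content_def)

section \<open>Commuting the x-operators past the u-operators\<close>

definition neg_u :: "(nat \<Rightarrow> 'a::comm_ring_1) \<Rightarrow> int \<Rightarrow> 'a" where
  "neg_u u z = (if 1 \<le> z then - u (nat z) else 0)"

definition u_op :: "(nat \<Rightarrow> 'a::comm_ring_1) \<Rightarrow> int \<Rightarrow> nat \<times> nat \<Rightarrow> 'a" where
  "u_op u q = (\<lambda>a. neg_u u (q + content a))"

definition xu_op :: "(nat \<Rightarrow> 'a::comm_ring_1) \<Rightarrow> 'a \<Rightarrow> int \<Rightarrow> nat \<times> nat \<Rightarrow> 'a" where
  "xu_op u y q = (\<lambda>a. y + neg_u u (q + content a))"

definition u_ops :: "(nat \<Rightarrow> 'a::comm_ring_1) \<Rightarrow> int \<Rightarrow> nat \<Rightarrow> (nat \<times> nat \<Rightarrow> 'a) list" where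
  "u_ops u q K = map (\<lambda>k. u_op u (q + int k)) [0..<K]"

fun xu_ops :: "(nat \<Rightarrow> 'a::comm_ring_1) \<Rightarrow> 'a list \<Rightarrow> int \<Rightarrow> (nat \<times> nat \<Rightarrow> 'a) list" where
  "xu_ops u [] q = []"
| "xu_ops u (y # ys) q = xu_op u y q # xu_ops u ys (q + 1)"

lemma u_ops_0: "u_ops u q 0 = []"
  by (simp add: u_ops_def)

lemma u_ops_Suc: "u_ops u q (Suc K) = u_op u q # u_ops u (q + 1) K"
  unfolding u_ops_def
  by (simp add: upt_conv_Cons map_Suc_upt[symmetric] del: upt_Suc) (simp add: algebra_simps)

lemma length_xu_ops: "length (xu_ops u ys q) = length ys"
  by (induction ys arbitrary: q) auto

lemma nth_xu_ops: "t < length ys \<Longrightarrow> xu_ops u ys q ! t = xu_op u (ys ! t) (q + int t)"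
proof (induction ys arbitrary: q t)
  case (Cons y ys)
  then show ?case by (cases t) (simp_all add: algebra_simps)
qed simp

lemma xu_op_u_op_exchange:
  assumes L: "finite L" "\<forall>(i, j)\<in>L. i \<le> R" and D: "D \<in> shapes_in L" and E: "E \<in> shapes_in L"
  shows "chain_sum L [xu_op u y q, u_op u (q + 1)] D E = chain_sum L [u_op u q, xu_op u y (q + 1)] D E"
proof -
  have "u_op u (q + 1) = (\<lambda>a. neg_u u (q + (content a + 1)))"
    and "xu_op u y (q + 1) = (\<lambda>a. y + neg_u u (q + (content a + 1)))"
    unfolding u_op_def xu_op_def by (simp_all add: algebra_simps)
  then show ?thesis
    unfolding chain_sum_pair[OF L(1) E]
    using strip_weights_exchange[OF L D E, of y "\<lambda>z. neg_u u (q + z)"]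
    by (simp add: u_op_def xu_op_def)
qed

lemma xu_op_past_u_ops:
  assumes L: "finite L" "\<forall>(i, j)\<in>L. i \<le> R" and D: "D \<in> shapes_in L"
  shows "chain_sum L (xu_op u y q # u_ops u (q + 1) K @ post) D E
       = chain_sum L (u_ops u q K @ xu_op u y (q + int K) # post) D E"
  using D
proof (induction K arbitrary: q D)
  case 0 then show ?case by (simp add: u_ops_0)
next
  case (Suc K)
  have "chain_sum L (xu_op u y q # u_ops u (q + 1) (Suc K) @ post) D E
      = chain_sum L ([] @ [xu_op u y q, u_op u (q + 1)] @ (u_ops u (q + 2) K @ post)) D E"
    by (simp add: u_ops_Suc algebra_simps)
  also have "\<dots> = chain_sum L ([] @ [u_op u q, xu_op u y (q + 1)] @ (u_ops u (q + 2) K @ post)) D E"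
    by (rule chain_sum_replace[OF L(1) Suc.prems]) (rule xu_op_u_op_exchange[OF L])
  also have "\<dots> = chain_sum L ([u_op u q] @ (xu_op u y (q + 1) # u_ops u (q + 1 + 1) K @ post)) D E"
    by (simp add: algebra_simps)
  also have "\<dots> = chain_sum L ([u_op u q] @ (u_ops u (q + 1) K @ xu_op u y (q + 1 + int K) # post)) D E"
    by (rule chain_sum_prefix[OF Suc.prems]) (rule Suc.IH)
  also have "\<dots> = chain_sum L (u_ops u q (Suc K) @ xu_op u y (q + int (Suc K)) # post) D E"
    by (simp add: u_ops_Suc algebra_simps)
  finally show ?case .
qed

lemma xu_ops_past_u_ops:
  assumes L: "finite L" "\<forall>(i, j)\<in>L. i \<le> R" and D: "D \<in> shapes_in L"
  shows "chain_sum L (xu_ops u ys q @ u_ops u (q + int (length ys)) K @ post) D E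
       = chain_sum L (u_ops u q K @ xu_ops u ys (q + int K) @ post) D E"
  using D
proof (induction ys arbitrary: q D)
  case Nil then show ?case by simp
next
  case (Cons y ys)
  have "chain_sum L (xu_ops u (y # ys) q @ u_ops u (q + int (length (y # ys))) K @ post) D E
      = chain_sum L ([xu_op u y q] @ (xu_ops u ys (q + 1) @ u_ops u (q + 1 + int (length ys)) K @ post)) D E"
    by (simp add: algebra_simps)
  also have "\<dots> = chain_sum L ([xu_op u y q] @ (u_ops u (q + 1) K @ xu_ops u ys (q + 1 + int K) @ post)) D E"
    by (rule chain_sum_prefix[OF Cons.prems]) (rule Cons.IH)
  also have "\<dots> = chain_sum L (u_ops u q K @ xu_op u y (q + int K) # (xu_ops u ys (q + 1 + int K) @ post)) D E"
    using xu_op_past_u_ops[OF L Cons.prems] by simp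
  also have "\<dots> = chain_sum L (u_ops u q K @ xu_ops u (y # ys) (q + int K) @ post) D E"
    by (simp add: algebra_simps)
  finally show ?case .
qed

text \<open>
  A u-operator with shift q \<le> 0 is trivial on the empty shape: the box (1, 1) has content 0,
  so its weight w q vanishes and no nonempty shape can be reached.\<close>
lemma u_op_from_empty:
  assumes L: "finite L" and F: "F \<in> shapes_in L" and q: "q \<le> 0"
  shows "strip_weight (u_op u q) {} F = (if F = {} then 1 else 0)"
proof (cases "F = {}")
  case True then show ?thesis by (simp add: strip_weight_def horiz_strip_def)
next
  case False
  have Fsh: "is_shape F" "F \<subseteq> L" using F by (auto simp: shapes_in_def)
  obtain i j where ij: "(i, j) \<in> F" using False by auto
  then have "(1, 1) \<in> F" using is_shapeD[OF Fsh(1) ij, of 1 1] is_shape_pos[OF Fsh(1) ij] by simp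
  moreover have "u_op u q (1, 1) = 0" using q by (simp add: u_op_def neg_u_def content_def)
  moreover have "finite F" using Fsh(2) L finite_subset by blast
  ultimately have "(\<Prod>a\<in>F - {}. u_op u q a) = 0" by (metis Diff_empty prod_zero)
  then show ?thesis using False by (simp add: strip_weight_def)
qed

lemma u_ops_from_empty:
  assumes L: "finite L"
  shows "q + int K \<le> 1 \<Longrightarrow> chain_sum L (u_ops u q K @ rest) {} G = chain_sum L rest {} G"
proof (induction K arbitrary: q)
  case 0 then show ?case by (simp add: u_ops_0)
next
  case (Suc K)
  have "chain_sum L (u_ops u q (Suc K) @ rest) {} G
      = (\<Sum>F\<in>shapes_in L. strip_weight (u_op u q) {} F * chain_sum L (u_ops u (q + 1) K @ rest) F G)"
    by (simp add: u_ops_Suc)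
  also have "\<dots> = (\<Sum>F\<in>shapes_in L. if F = {} then chain_sum L (u_ops u (q + 1) K @ rest) F G else 0)"
    using Suc.prems by (intro sum.cong) (simp_all add: u_op_from_empty[OF L])
  also have "\<dots> = chain_sum L (u_ops u (q + 1) K @ rest) {} G"
    using finite_shapes_in[OF L] empty_in_shapes_in[of L] by (simp add: sum.delta')
  finally show ?case using Suc.IH[of "q + 1"] Suc.prems by simp
qed

theorem chain_sum_reorder:
  assumes L: "finite L" "\<forall>(i, j)\<in>L. i \<le> R" and q: "q + int K \<le> 1"
  shows "chain_sum L (xu_ops u ys q @ u_ops u (q + int (length ys)) K) {} E
       = chain_sum L (xu_ops u ys (q + int K)) {} E"
  using xu_ops_past_u_ops[OF L empty_in_shapes_in, of u ys q K "[]" E]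
    u_ops_from_empty[OF L(1) q, of u "xu_ops u ys (q + int K)" E]
  by simp

lemma xu_ops_map:
  "xu_ops u (map f [a..<b]) q = map (\<lambda>m. xu_op u (f m) (q + int m - int a)) [a..<b]"
  by (rule nth_equalityI) (simp_all add: length_xu_ops nth_xu_ops algebra_simps del: upt_Suc)

lemma u_ops_map: "u_ops u q K = map (\<lambda>m. u_op u (q + int m - 1)) [1..<Suc K]"
  by (rule nth_equalityI) (simp_all add: u_ops_def algebra_simps del: upt_Suc)

section \<open>Young diagrams and the left-hand side\<close>

lemma boxes_mem: "(i, j) \<in> boxes lam \<longleftrightarrow> 1 \<le> i \<and> i \<le> length lam \<and> 1 \<le> j \<and> j \<le> lam ! (i - 1)"
  unfolding boxes_def by simp

lemma boxes_col_le: "(i, j) \<in> boxes lam \<Longrightarrow> j \<le> sum_list lam"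
proof -
  assume "(i, j) \<in> boxes lam"
  then have "i - 1 < length lam" "j \<le> lam ! (i - 1)" unfolding boxes_mem by auto
  then show ?thesis using elem_le_sum_list[of "i - 1" lam] by simp
qed

lemma content_le: "a \<in> boxes lam \<Longrightarrow> content a \<le> int (sum_list lam) - 1"
  using boxes_col_le[of "fst a" "snd a" lam] by (cases a) (auto simp: content_def boxes_mem)

lemma boxes_rows: "\<forall>(i, j)\<in>boxes lam. i \<le> length lam"
  unfolding boxes_def by auto

lemma finite_boxes: "finite (boxes lam)"
proof -
  have "boxes lam \<subseteq> {1..length lam} \<times> {1..sum_list lam}"
    using boxes_col_le by (auto simp: boxes_mem)
  then show ?thesis using finite_subset by blast
qed

lemma boxes_shape:
  assumes "is_partition lam"
  shows "is_shape (boxes lam)"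
  unfolding is_shape_def
proof (rule conjI; intro allI impI)
  fix i j assume "(i, j) \<in> boxes lam" then show "1 \<le> i \<and> 1 \<le> j" by (simp add: boxes_mem)
next
  fix i j i' j' assume a: "(i, j) \<in> boxes lam \<and> 1 \<le> i' \<and> i' \<le> i \<and> 1 \<le> j' \<and> j' \<le> j"
  have "sorted (rev lam)" using assms by (simp add: is_partition_def)
  moreover have "i' - 1 \<le> i - 1" "i - 1 < length lam" using a by (auto simp: boxes_mem)
  ultimately have "lam ! (i - 1) \<le> lam ! (i' - 1)" by (rule sorted_rev_nth_mono)
  then show "(i', j') \<in> boxes lam" using a by (simp add: boxes_mem)
qed

lemma boxes_in_shapes_in: "is_partition lam \<Longrightarrow> boxes lam \<in> shapes_in (boxes lam)"
  using boxes_shape by (simp add: shapes_in_def)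

lemma col_len_props:
  assumes P: "is_partition lam" and ij: "(i, j) \<in> boxes lam"
  shows "i \<le> col_len lam j" "(col_len lam j, j) \<in> boxes lam"
proof -
  define S where "S = {i. (i, j) \<in> boxes lam}"
  have "S \<subseteq> {1..length lam}" unfolding S_def by (auto simp: boxes_mem)
  then have fin: "finite S" using finite_subset by blast
  have down: "y \<in> S" if "x \<in> S" "1 \<le> y" "y \<le> x" for x y
    using that is_shapeD[OF boxes_shape[OF P], of x j y j] unfolding S_def by (auto simp: boxes_mem)
  have iS: "i \<in> S" using ij by (simp add: S_def)
  have MS: "Max S \<in> S" using Max_in[OF fin] iS by blast
  have "S = {1..Max S}"
  proof
    show "S \<subseteq> {1..Max S}" using Max_ge[OF fin] by (auto simp: S_def boxes_mem)
    show "{1..Max S} \<subseteq> S" using down[OF MS] by auto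
  qed
  then have "col_len lam j = Max S" unfolding col_len_def S_def[symmetric] by (metis card_atLeastAtMost diff_Suc_1)
  then show "i \<le> col_len lam j" "(col_len lam j, j) \<in> boxes lam"
    using Max_ge[OF fin iS] MS by (simp_all add: S_def)
qed

lemma skew_ssyt_column_growth:
  assumes D: "is_shape D" and E: "is_shape E" and T: "T \<in> skew_ssyt D E b" and ij: "(i, j) \<in> E - D"
  shows "(i + m, j) \<in> E \<Longrightarrow> (i + m, j) \<notin> D \<and> T (i, j) + m \<le> T (i + m, j)"
proof (induction m)
  case 0 then show ?case using ij by simp
next
  case (Suc m)
  have i1: "1 \<le> i" "1 \<le> j" using is_shape_pos[OF E] ij by auto
  have "(i + m, j) \<in> E" using is_shapeD[OF E Suc.prems, of "i + m" j] i1 by simp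
  then have IH: "(i + m, j) \<notin> D" "T (i, j) + m \<le> T (i + m, j)" using Suc.IH by auto
  have nD: "(i + Suc m, j) \<notin> D"
    using is_shapeD[OF D, of "i + Suc m" j i j] i1 ij by auto
  have "T (i + m, j) < T (i + Suc m, j)"
    using skew_ssytD(3)[OF T, of "i + m" j "i + Suc m"] IH \<open>(i + m, j) \<in> E\<close> Suc.prems nD by simp
  then show ?case using IH nD by simp
qed

lemma ssyt_as_skew: "ssyt n lam = skew_ssyt {} (boxes lam) n"
  unfolding ssyt_def skew_ssyt_def by simp

text \<open>In a semistandard tableau T (i, j) \<ge> i; hence T(alpha) + c(alpha) \<ge> 1 for every box.\<close>
lemma ssyt_ge_row:
  assumes P: "is_partition lam" and T: "T \<in> ssyt n lam" and ij: "(i, j) \<in> boxes lam"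
  shows "i \<le> T (i, j)"
proof -
  have sh: "is_shape (boxes lam)" using boxes_shape[OF P] .
  have T': "T \<in> skew_ssyt {} (boxes lam) n" using T ssyt_as_skew by simp
  have i1: "1 \<le> i" "1 \<le> j" using ij by (auto simp: boxes_mem)
  have b1: "(1, j) \<in> boxes lam - {}" using is_shapeD[OF sh ij, of 1 j] i1 by simp
  have "T (1, j) + (i - 1) \<le> T (1 + (i - 1), j)"
    using skew_ssyt_column_growth[OF _ sh T' b1, of "i - 1"] i1 ij by (simp add: is_shape_def)
  moreover have "1 \<le> T (1, j)" using PiE_mem[OF skew_ssytD(1)[OF T'] b1] by simp
  ultimately show ?thesis using i1 by simp
qed

theorem factorial_schur_chain_sum:
  fixes x u :: "nat \<Rightarrow> 'a::comm_ring_1"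
  assumes P: "is_partition lam"
  shows "factorial_schur n lam x u = chain_sum (boxes lam) (xu_ops u (map x [1..<Suc n]) 1) {} (boxes lam)"
proof -
  have "factorial_schur n lam x u
      = (\<Sum>T\<in>ssyt n lam. \<Prod>a\<in>boxes lam - {}. x (T a) + neg_u u (int (T a) + content a))"
    unfolding factorial_schur_def Diff_empty
  proof (intro sum.cong prod.cong refl)
    fix T a assume T: "T \<in> ssyt n lam" and a: "a \<in> boxes lam"
    obtain i j where ij: "a = (i, j)" by (cases a)
    have "i \<le> T (i, j)" "1 \<le> j" using ssyt_ge_row[OF P T] a ij by (auto simp: boxes_mem)
    then have "1 \<le> int (T a) + content a" using ij by (simp add: content_def)
    then show "x (T a) - u (nat (int (T a) + content a)) = x (T a) + neg_u u (int (T a) + content a)"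
      by (simp add: neg_u_def)
  qed
  also have "\<dots> = chain_sum (boxes lam) (map (\<lambda>m a. x m + neg_u u (int m + content a)) [1..<Suc n]) {} (boxes lam)"
    unfolding ssyt_as_skew
    by (rule skew_ssyt_chain_sum[OF finite_boxes empty_in_shapes_in boxes_in_shapes_in[OF P]]) simp
  also have "map (\<lambda>m a. x m + neg_u u (int m + content a)) [1..<Suc n] = xu_ops u (map x [1..<Suc n]) 1"
    unfolding xu_ops_map xu_op_def by simp
  finally show ?thesis .
qed

section \<open>Supertableaux and the right-hand side\<close>

lemma supertableauxD:
  assumes "T \<in> supertableaux n lam"
  shows "T \<in> boxes lam \<rightarrow>\<^sub>E symbols n"
    and "\<And>i j j'. (i, j) \<in> boxes lam \<Longrightarrow> (i, j') \<in> boxes lam \<Longrightarrow> j < j' \<Longrightarrow>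
           is_primed (T (i, j)) \<Longrightarrow> is_primed (T (i, j'))"
    and "\<And>i i' j. (i, j) \<in> boxes lam \<Longrightarrow> (i', j) \<in> boxes lam \<Longrightarrow> i < i' \<Longrightarrow>
           is_primed (T (i, j)) \<Longrightarrow> is_primed (T (i', j))"
    and "\<And>i j j'. (i, j) \<in> boxes lam \<Longrightarrow> (i, j') \<in> boxes lam \<Longrightarrow> j < j' \<Longrightarrow>
           \<not> is_primed (T (i, j)) \<Longrightarrow> \<not> is_primed (T (i, j')) \<Longrightarrow> symval (T (i, j)) \<le> symval (T (i, j'))"
    and "\<And>i i' j. (i, j) \<in> boxes lam \<Longrightarrow> (i', j) \<in> boxes lam \<Longrightarrow> i < i' \<Longrightarrow>
           \<not> is_primed (T (i, j)) \<Longrightarrow> \<not> is_primed (T (i', j)) \<Longrightarrow> symval (T (i, j)) < symval (T (i', j))"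
    and "\<And>i j j'. (i, j) \<in> boxes lam \<Longrightarrow> (i, j') \<in> boxes lam \<Longrightarrow> j < j' \<Longrightarrow>
           is_primed (T (i, j)) \<Longrightarrow> is_primed (T (i, j')) \<Longrightarrow> symval (T (i, j)) < symval (T (i, j'))"
    and "\<And>i i' j. (i, j) \<in> boxes lam \<Longrightarrow> (i', j) \<in> boxes lam \<Longrightarrow> i < i' \<Longrightarrow>
           is_primed (T (i, j)) \<Longrightarrow> is_primed (T (i', j)) \<Longrightarrow> symval (T (i, j)) \<le> symval (T (i', j))"
    and "\<And>i j. (i, j) \<in> boxes lam \<Longrightarrow> is_primed (T (i, j)) \<Longrightarrow>
           int (symval (T (i, j))) \<le> int n - int (col_len lam j) + int j"
proof -
  note ST = assms[unfolded supertableaux_def mem_Collect_eq]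
  show "T \<in> boxes lam \<rightarrow>\<^sub>E symbols n" using ST[THEN conjunct1] .
  show "\<And>i j j'. (i, j) \<in> boxes lam \<Longrightarrow> (i, j') \<in> boxes lam \<Longrightarrow> j < j' \<Longrightarrow>
      is_primed (T (i, j)) \<Longrightarrow> is_primed (T (i, j'))"
    using ST[THEN conjunct2, THEN conjunct1] by blast
  show "\<And>i i' j. (i, j) \<in> boxes lam \<Longrightarrow> (i', j) \<in> boxes lam \<Longrightarrow> i < i' \<Longrightarrow>
      is_primed (T (i, j)) \<Longrightarrow> is_primed (T (i', j))"
    using ST[THEN conjunct2, THEN conjunct2, THEN conjunct1] by blast
  show "\<And>i j j'. (i, j) \<in> boxes lam \<Longrightarrow> (i, j') \<in> boxes lam \<Longrightarrow> j < j' \<Longrightarrow>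
      \<not> is_primed (T (i, j)) \<Longrightarrow> \<not> is_primed (T (i, j')) \<Longrightarrow> symval (T (i, j)) \<le> symval (T (i, j'))"
    using ST[THEN conjunct2, THEN conjunct2, THEN conjunct2, THEN conjunct1] by blast
  show "\<And>i i' j. (i, j) \<in> boxes lam \<Longrightarrow> (i', j) \<in> boxes lam \<Longrightarrow> i < i' \<Longrightarrow>
      \<not> is_primed (T (i, j)) \<Longrightarrow> \<not> is_primed (T (i', j)) \<Longrightarrow> symval (T (i, j)) < symval (T (i', j))"
    using ST[THEN conjunct2, THEN conjunct2, THEN conjunct2, THEN conjunct2, THEN conjunct1] by blast
  show "\<And>i j j'. (i, j) \<in> boxes lam \<Longrightarrow> (i, j') \<in> boxes lam \<Longrightarrow> j < j' \<Longrightarrow>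
      is_primed (T (i, j)) \<Longrightarrow> is_primed (T (i, j')) \<Longrightarrow> symval (T (i, j)) < symval (T (i, j'))"
    using ST[THEN conjunct2, THEN conjunct2, THEN conjunct2, THEN conjunct2, THEN conjunct2, THEN conjunct1] by blast
  show "\<And>i i' j. (i, j) \<in> boxes lam \<Longrightarrow> (i', j) \<in> boxes lam \<Longrightarrow> i < i' \<Longrightarrow>
      is_primed (T (i, j)) \<Longrightarrow> is_primed (T (i', j)) \<Longrightarrow> symval (T (i, j)) \<le> symval (T (i', j))"
    using ST[THEN conjunct2, THEN conjunct2, THEN conjunct2, THEN conjunct2, THEN conjunct2, THEN conjunct2, THEN conjunct1] by blast
  show "\<And>i j. (i, j) \<in> boxes lam \<Longrightarrow> is_primed (T (i, j)) \<Longrightarrow>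
      int (symval (T (i, j))) \<le> int n - int (col_len lam j) + int j"
    using ST[THEN conjunct2, THEN conjunct2, THEN conjunct2, THEN conjunct2, THEN conjunct2, THEN conjunct2, THEN conjunct2] by simp
qed

lemma symbol_unprimed: "s \<in> symbols n \<Longrightarrow> \<not> is_primed s \<Longrightarrow> s = Unp (symval s) \<and> symval s \<in> {1..n}"
  unfolding symbols_def by auto

lemma symbol_primed: "s \<in> symbols n \<Longrightarrow> is_primed s \<Longrightarrow> s = Pr (symval s) \<and> 1 \<le> symval s"
  unfolding symbols_def by auto

lemma supertableau_row_growth:
  assumes P: "is_partition lam" and T: "T \<in> supertableaux n lam"
    and ij: "(i, j) \<in> boxes lam" and pr: "is_primed (T (i, j))"
  shows "(i, j + m) \<in> boxes lam \<Longrightarrow> is_primed (T (i, j + m)) \<and> symval (T (i, j)) + m \<le> symval (T (i, j + m))"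
proof (induction m)
  case 0 then show ?case using pr by simp
next
  case (Suc m)
  have i1: "1 \<le> i" "1 \<le> j" using ij by (auto simp: boxes_mem)
  have b: "(i, j + m) \<in> boxes lam" using is_shapeD[OF boxes_shape[OF P] Suc.prems, of i "j + m"] i1 by simp
  then have IH: "is_primed (T (i, j + m))" "symval (T (i, j)) + m \<le> symval (T (i, j + m))" using Suc.IH by auto
  have p2: "is_primed (T (i, j + Suc m))" using supertableauxD(2)[OF T ij Suc.prems _ pr] by simp
  have "symval (T (i, j + m)) < symval (T (i, j + Suc m))"
    using supertableauxD(6)[OF T b Suc.prems _ IH(1) p2] by simp
  then show ?case using IH p2 by simp
qed

text \<open>
  The shift between a primed entry k' in box a and its code k - c(a) + N, N = |lambda|: it turns
  the conditions on primed entries into those of a semistandard tableau of a skew shape.\<close>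
definition primed_code :: "nat list \<Rightarrow> nat \<Rightarrow> nat \<times> nat \<Rightarrow> int" where
  "primed_code lam k a = int k - content a + int (sum_list lam)"

definition primed_value :: "nat list \<Rightarrow> nat \<Rightarrow> nat \<times> nat \<Rightarrow> int" where
  "primed_value lam q a = int q - int (sum_list lam) + content a"

lemma primed_code_props:
  assumes P: "is_partition lam" and T: "T \<in> supertableaux n lam"
    and a: "(i, j) \<in> boxes lam" and pr: "is_primed (T (i, j))"
  shows "2 \<le> primed_code lam (symval (T (i, j))) (i, j)"
    and "primed_code lam (symval (T (i, j))) (i, j) \<le> int (n + sum_list lam)"
    and "\<And>j'. (i, j') \<in> boxes lam \<Longrightarrow> j < j' \<Longrightarrow>
           primed_code lam (symval (T (i, j))) (i, j) \<le> primed_code lam (symval (T (i, j'))) (i, j')"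
    and "\<And>i'. (i', j) \<in> boxes lam \<Longrightarrow> i < i' \<Longrightarrow> is_primed (T (i', j)) \<Longrightarrow>
           primed_code lam (symval (T (i, j))) (i, j) < primed_code lam (symval (T (i', j))) (i', j)"
proof -
  have "1 \<le> symval (T (i, j))" using symbol_primed[OF PiE_mem[OF supertableauxD(1)[OF T] a] pr] by blast
  then show "2 \<le> primed_code lam (symval (T (i, j))) (i, j)"
    using boxes_col_le[OF a] a by (simp add: primed_code_def content_def boxes_mem)
  show "primed_code lam (symval (T (i, j))) (i, j) \<le> int (n + sum_list lam)"
    using supertableauxD(8)[OF T a pr] col_len_props(1)[OF P a] by (simp add: primed_code_def content_def)
  show "primed_code lam (symval (T (i, j))) (i, j) \<le> primed_code lam (symval (T (i, j'))) (i, j')"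
    if "(i, j') \<in> boxes lam" "j < j'" for j'
  proof -
    have "symval (T (i, j)) + (j' - j) \<le> symval (T (i, j + (j' - j)))"
      using supertableau_row_growth[OF P T a pr, of "j' - j"] that by simp
    then show ?thesis using that by (simp add: primed_code_def content_def)
  qed
  show "primed_code lam (symval (T (i, j))) (i, j) < primed_code lam (symval (T (i', j))) (i', j)"
    if "(i', j) \<in> boxes lam" "i < i'" "is_primed (T (i', j))" for i'
    using supertableauxD(7)[OF T a that(1,2) pr that(3)] that(2) by (simp add: primed_code_def content_def)
qed

lemma primed_value_props:
  assumes P: "is_partition lam" and nu: "is_shape nu"
    and Q: "Q \<in> skew_ssyt nu (boxes lam) (n + sum_list lam)" and a: "(i, j) \<in> boxes lam - nu"
  shows "\<And>j'. (i, j') \<in> boxes lam - nu \<Longrightarrow> j < j' \<Longrightarrow> primed_value lam (Q (i, j)) (i, j) < primed_value lam (Q (i, j')) (i, j')"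
    and "\<And>i'. (i', j) \<in> boxes lam - nu \<Longrightarrow> i < i' \<Longrightarrow> primed_value lam (Q (i, j)) (i, j) \<le> primed_value lam (Q (i', j)) (i', j)"
    and "primed_value lam (Q (i, j)) (i, j) \<le> int n - int (col_len lam j) + int j"
proof -
  have sh: "is_shape (boxes lam)" using boxes_shape[OF P] .
  show "primed_value lam (Q (i, j)) (i, j) < primed_value lam (Q (i, j')) (i, j')"
    if "(i, j') \<in> boxes lam - nu" "j < j'" for j'
    using skew_ssytD(2)[OF Q a that] that(2) by (simp add: primed_value_def content_def)
  show "primed_value lam (Q (i, j)) (i, j) \<le> primed_value lam (Q (i', j)) (i', j)"
    if "(i', j) \<in> boxes lam - nu" "i < i'" for i'
  proof -
    have "Q (i, j) + (i' - i) \<le> Q (i + (i' - i), j)"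
      using skew_ssyt_column_growth[OF nu sh Q a, of "i' - i"] that by simp
    then show ?thesis using that(2) by (simp add: primed_value_def content_def)
  qed
  define c where "c = col_len lam j"
  have ic: "i \<le> c" "(c, j) \<in> boxes lam" using col_len_props[OF P, of i j] a unfolding c_def by auto
  then have "(i + (c - i), j) \<notin> nu \<and> Q (i, j) + (c - i) \<le> Q (i + (c - i), j)"
    using skew_ssyt_column_growth[OF nu sh Q a, of "c - i"] by simp
  moreover have "Q (c, j) \<le> n + sum_list lam" if "(c, j) \<notin> nu"
    using PiE_mem[OF skew_ssytD(1)[OF Q], of "(c, j)"] ic that by simp
  ultimately have "Q (i, j) + (c - i) \<le> n + sum_list lam" using ic by simp
  then have "int (Q (i, j)) + int c - int i \<le> int n + int (sum_list lam)" using ic(1) by arith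
  then show "primed_value lam (Q (i, j)) (i, j) \<le> int n - int (col_len lam j) + int j"
    unfolding c_def[symmetric] by (simp add: primed_value_def content_def)
qed

definition unprimed_part :: "nat list \<Rightarrow> ((nat \<times> nat) \<Rightarrow> sym) \<Rightarrow> (nat \<times> nat) set" where
  "unprimed_part lam T = {a \<in> boxes lam. \<not> is_primed (T a)}"

lemma unprimed_part_shape:
  assumes P: "is_partition lam" and T: "T \<in> supertableaux n lam"
  shows "unprimed_part lam T \<in> shapes_in (boxes lam)"
proof -
  have sh: "is_shape (boxes lam)" using boxes_shape[OF P] .
  have "is_shape (unprimed_part lam T)"
    unfolding is_shape_def
  proof (rule conjI; intro allI impI)
    fix i j assume "(i, j) \<in> unprimed_part lam T"
    then show "1 \<le> i \<and> 1 \<le> j" by (simp add: unprimed_part_def boxes_mem)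
  next
    fix i j i' j' assume a: "(i, j) \<in> unprimed_part lam T \<and> 1 \<le> i' \<and> i' \<le> i \<and> 1 \<le> j' \<and> j' \<le> j"
    have ij: "(i, j) \<in> boxes lam" "\<not> is_primed (T (i, j))" using a by (auto simp: unprimed_part_def)
    have b1: "(i', j) \<in> boxes lam" and b2: "(i', j') \<in> boxes lam"
      using is_shapeD[OF sh ij(1), of i' j] is_shapeD[OF sh ij(1), of i' j'] a by auto
    have "\<not> is_primed (T (i', j))"
      using supertableauxD(3)[OF T b1 ij(1)] ij(2) a by (cases "i' = i") auto
    then have "\<not> is_primed (T (i', j'))"
      using supertableauxD(2)[OF T b2 b1] a by (cases "j' = j") auto
    then show "(i', j') \<in> unprimed_part lam T" using b2 by (simp add: unprimed_part_def)
  qed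
  then show ?thesis by (auto simp: shapes_in_def unprimed_part_def)
qed

text \<open>
  A supertableau is a triple: its unprimed shape nu, the tableau of nu formed by the unprimed
  entries, and the codes of the primed entries, a tableau of lambda/nu with positive decodings.\<close>
definition primed_codes :: "nat \<Rightarrow> nat list \<Rightarrow> (nat \<times> nat) set \<Rightarrow> (nat \<times> nat \<Rightarrow> nat) set" where
  "primed_codes n lam nu = {Q \<in> skew_ssyt nu (boxes lam) (n + sum_list lam).
     \<forall>a\<in>boxes lam - nu. 1 \<le> primed_value lam (Q a) a}"

definition tab_triples :: "nat \<Rightarrow> nat list \<Rightarrow> ((nat \<times> nat) set \<times> ((nat \<times> nat \<Rightarrow> nat) \<times> (nat \<times> nat \<Rightarrow> nat))) set" where
  "tab_triples n lam = (SIGMA nu:shapes_in (boxes lam). skew_ssyt {} nu n \<times> primed_codes n lam nu)"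

definition split_tab :: "nat list \<Rightarrow> ((nat \<times> nat) \<Rightarrow> sym) \<Rightarrow> (nat \<times> nat) set \<times> ((nat \<times> nat \<Rightarrow> nat) \<times> (nat \<times> nat \<Rightarrow> nat))" where
  "split_tab lam T = (unprimed_part lam T, (restrict (\<lambda>a. symval (T a)) (unprimed_part lam T),
      restrict (\<lambda>a. nat (primed_code lam (symval (T a)) a)) (boxes lam - unprimed_part lam T)))"

definition join_tab :: "nat list \<Rightarrow> (nat \<times> nat) set \<times> ((nat \<times> nat \<Rightarrow> nat) \<times> (nat \<times> nat \<Rightarrow> nat)) \<Rightarrow> ((nat \<times> nat) \<Rightarrow> sym)" where
  "join_tab lam z = (\<lambda>a. if a \<in> fst z then Unp (fst (snd z) a)
     else if a \<in> boxes lam then Pr (nat (primed_value lam (snd (snd z) a) a)) else undefined)"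

lemma split_tab_unprimed:
  assumes T: "T \<in> supertableaux n lam"
  shows "restrict (\<lambda>a. symval (T a)) (unprimed_part lam T) \<in> skew_ssyt {} (unprimed_part lam T) n"
  unfolding skew_ssyt_def
proof (intro CollectI conjI allI impI)
  show "restrict (\<lambda>a. symval (T a)) (unprimed_part lam T) \<in> (unprimed_part lam T - {}) \<rightarrow>\<^sub>E {1..n}"
  proof (rule PiE_I)
    fix a assume "a \<in> unprimed_part lam T - {}"
    then have "T a \<in> symbols n" "\<not> is_primed (T a)"
      using PiE_mem[OF supertableauxD(1)[OF T]] unfolding unprimed_part_def by auto
    then show "restrict (\<lambda>a. symval (T a)) (unprimed_part lam T) a \<in> {1..n}"
      using symbol_unprimed \<open>a \<in> unprimed_part lam T - {}\<close> by auto
  qed simp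
next
  fix i j j' assume "(i, j) \<in> unprimed_part lam T - {} \<and> (i, j') \<in> unprimed_part lam T - {} \<and> j < j'"
  then show "restrict (\<lambda>a. symval (T a)) (unprimed_part lam T) (i, j)
      \<le> restrict (\<lambda>a. symval (T a)) (unprimed_part lam T) (i, j')"
    unfolding unprimed_part_def using supertableauxD(4)[OF T] by auto
next
  fix i i' j assume "(i, j) \<in> unprimed_part lam T - {} \<and> (i', j) \<in> unprimed_part lam T - {} \<and> i < i'"
  then show "restrict (\<lambda>a. symval (T a)) (unprimed_part lam T) (i, j)
      < restrict (\<lambda>a. symval (T a)) (unprimed_part lam T) (i', j)"
    unfolding unprimed_part_def using supertableauxD(5)[OF T] by auto
qed

lemma split_tab_primed:
  assumes P: "is_partition lam" and T: "T \<in> supertableaux n lam"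
  shows "restrict (\<lambda>a. nat (primed_code lam (symval (T a)) a)) (boxes lam - unprimed_part lam T)
           \<in> primed_codes n lam (unprimed_part lam T)"
proof -
  define nu where "nu = unprimed_part lam T"
  define code where "code a = primed_code lam (symval (T a)) a" for a
  define Q where "Q = restrict (\<lambda>a. nat (code a)) (boxes lam - nu)"
  have prm: "is_primed (T a)" if "a \<in> boxes lam - nu" for a
    using that unfolding nu_def unprimed_part_def by auto
  have code_range: "2 \<le> code a \<and> code a \<le> int (n + sum_list lam)" if "a \<in> boxes lam - nu" for a
    using primed_code_props(1,2)[OF P T, of "fst a" "snd a"] prm[OF that] that unfolding code_def by auto
  have Qint: "int (Q a) = code a" if "a \<in> boxes lam - nu" for a
    using code_range[OF that] that unfolding Q_def by simp
  have "Q \<in> primed_codes n lam nu"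
    unfolding primed_codes_def skew_ssyt_def
  proof (intro CollectI conjI allI impI ballI)
    show "Q \<in> (boxes lam - nu) \<rightarrow>\<^sub>E {1..n + sum_list lam}"
    proof (rule PiE_I)
      fix a assume a: "a \<in> boxes lam - nu"
      then show "Q a \<in> {1..n + sum_list lam}" using Qint[OF a] code_range[OF a] by simp
    qed (auto simp: Q_def)
  next
    fix i j j' assume a: "(i, j) \<in> boxes lam - nu \<and> (i, j') \<in> boxes lam - nu \<and> j < j'"
    then have "code (i, j) \<le> code (i, j')"
      using primed_code_props(3)[OF P T _ prm] unfolding code_def by blast
    then show "Q (i, j) \<le> Q (i, j')" using Qint a by (metis of_nat_le_iff)
  next
    fix i i' j assume a: "(i, j) \<in> boxes lam - nu \<and> (i', j) \<in> boxes lam - nu \<and> i < i'"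
    then have "code (i, j) < code (i', j)"
      using primed_code_props(4)[OF P T _ prm] prm unfolding code_def by blast
    then show "Q (i, j) < Q (i', j)" using Qint a by (metis of_nat_less_iff)
  next
    fix a assume a: "a \<in> boxes lam - nu"
    have "primed_value lam (Q a) a = int (symval (T a))"
      using Qint[OF a] unfolding code_def primed_code_def primed_value_def by simp
    then show "1 \<le> primed_value lam (Q a) a"
      using symbol_primed[OF PiE_mem[OF supertableauxD(1)[OF T]] prm[OF a]] a by simp
  qed
  then show ?thesis unfolding Q_def code_def nu_def .
qed

lemma split_tab_in:
  assumes P: "is_partition lam" and T: "T \<in> supertableaux n lam"
  shows "split_tab lam T \<in> tab_triples n lam"
  unfolding split_tab_def tab_triples_def
  using unprimed_part_shape[OF P T] split_tab_unprimed[OF T] split_tab_primed[OF P T] by simp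

lemma join_tab_entries:
  assumes z: "(nu, (Pm, Q)) \<in> tab_triples n lam" and a: "a \<in> boxes lam"
  shows "is_primed (join_tab lam (nu, (Pm, Q)) a) \<longleftrightarrow> a \<notin> nu"
    and "a \<in> nu \<Longrightarrow> join_tab lam (nu, (Pm, Q)) a = Unp (Pm a)"
    and "a \<notin> nu \<Longrightarrow> join_tab lam (nu, (Pm, Q)) a = Pr (nat (primed_value lam (Q a) a))"
    and "a \<notin> nu \<Longrightarrow> 1 \<le> primed_value lam (Q a) a"
    and "a \<notin> nu \<Longrightarrow> int (symval (join_tab lam (nu, (Pm, Q)) a)) = primed_value lam (Q a) a"
proof -
  have pos: "a \<notin> nu \<Longrightarrow> 1 \<le> primed_value lam (Q a) a"
    using z a unfolding tab_triples_def primed_codes_def by auto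
  then show "a \<notin> nu \<Longrightarrow> 1 \<le> primed_value lam (Q a) a" .
  show "is_primed (join_tab lam (nu, (Pm, Q)) a) \<longleftrightarrow> a \<notin> nu"
    and "a \<in> nu \<Longrightarrow> join_tab lam (nu, (Pm, Q)) a = Unp (Pm a)"
    and "a \<notin> nu \<Longrightarrow> join_tab lam (nu, (Pm, Q)) a = Pr (nat (primed_value lam (Q a) a))"
    and "a \<notin> nu \<Longrightarrow> int (symval (join_tab lam (nu, (Pm, Q)) a)) = primed_value lam (Q a) a"
    using a pos unfolding join_tab_def by auto
qed

lemma join_tab_in:
  assumes P: "is_partition lam" and z: "(nu, (Pm, Q)) \<in> tab_triples n lam"
  shows "join_tab lam (nu, (Pm, Q)) \<in> supertableaux n lam"
proof -
  define T where "T = join_tab lam (nu, (Pm, Q))"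
  define val where "val a = primed_value lam (Q a) a" for a
  have nush: "is_shape nu" "nu \<subseteq> boxes lam" and Pm: "Pm \<in> skew_ssyt {} nu n"
    and Q: "Q \<in> skew_ssyt nu (boxes lam) (n + sum_list lam)"
    using z unfolding tab_triples_def primed_codes_def by (auto simp: shapes_in_def)
  note entries = join_tab_entries[OF z, folded T_def val_def]
  have Tnu: "T a = Unp (Pm a)" if "a \<in> nu" for a using entries(2) that nush(2) by blast
  have prim: "is_primed (T a) \<longleftrightarrow> a \<notin> nu" if "a \<in> boxes lam" for a using entries(1) that .
  have sv_pr: "int (symval (T a)) = val a" if "a \<in> boxes lam - nu" for a using entries(5) that by blast
  have nu_left: "(i, j) \<in> nu" if "(i, j') \<in> nu" "(i, j) \<in> boxes lam" "j \<le> j'" for i j j'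
    using is_shapeD[OF nush(1) that(1), of i j] that(2,3) by (auto simp: boxes_mem)
  have nu_up: "(i, j) \<in> nu" if "(i', j) \<in> nu" "(i, j) \<in> boxes lam" "i \<le> i'" for i i' j
    using is_shapeD[OF nush(1) that(1), of i j] that(2,3) by (auto simp: boxes_mem)
  have "T \<in> supertableaux n lam"
    unfolding supertableaux_def mem_Collect_eq
  proof (intro conjI allI impI)
    show "T \<in> boxes lam \<rightarrow>\<^sub>E symbols n"
    proof (rule PiE_I)
      fix a assume a: "a \<in> boxes lam"
      show "T a \<in> symbols n"
      proof (cases "a \<in> nu")
        case True
        then show ?thesis using Tnu PiE_mem[OF skew_ssytD(1)[OF Pm]] unfolding symbols_def by auto
      next
        case False
        then have "1 \<le> nat (val a)" using entries(4)[OF a] by simp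
        then show ?thesis using entries(3)[OF a False] unfolding symbols_def by auto
      qed
    next
      fix a assume "a \<notin> boxes lam"
      then show "T a = undefined" using nush(2) unfolding T_def join_tab_def by auto
    qed
  next
    fix i j j' assume "(i, j) \<in> boxes lam \<and> (i, j') \<in> boxes lam \<and> j < j'"
    then show "\<not> (is_primed (T (i, j)) \<and> \<not> is_primed (T (i, j')))"
      using prim nu_left[of i j' j] by auto
  next
    fix i i' j assume "(i, j) \<in> boxes lam \<and> (i', j) \<in> boxes lam \<and> i < i'"
    then show "\<not> (is_primed (T (i, j)) \<and> \<not> is_primed (T (i', j)))"
      using prim nu_up[of i' j i] by auto
  next
    fix i j j' assume "(i, j) \<in> boxes lam \<and> (i, j') \<in> boxes lam \<and> j < j' \<and>
        \<not> is_primed (T (i, j)) \<and> \<not> is_primed (T (i, j'))"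
    then show "symval (T (i, j)) \<le> symval (T (i, j'))"
      using prim Tnu skew_ssytD(2)[OF Pm, of i j j'] by auto
  next
    fix i i' j assume "(i, j) \<in> boxes lam \<and> (i', j) \<in> boxes lam \<and> i < i' \<and>
        \<not> is_primed (T (i, j)) \<and> \<not> is_primed (T (i', j))"
    then show "symval (T (i, j)) < symval (T (i', j))"
      using prim Tnu skew_ssytD(3)[OF Pm, of i j i'] by auto
  next
    fix i j j' assume a: "(i, j) \<in> boxes lam \<and> (i, j') \<in> boxes lam \<and> j < j' \<and>
        is_primed (T (i, j)) \<and> is_primed (T (i, j'))"
    then have b: "(i, j) \<in> boxes lam - nu" "(i, j') \<in> boxes lam - nu" using prim by auto
    then have "int (symval (T (i, j))) < int (symval (T (i, j')))"
      using primed_value_props(1)[OF P nush(1) Q b(1) b(2)] a sv_pr unfolding val_def by simp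
    then show "symval (T (i, j)) < symval (T (i, j'))" by simp
  next
    fix i i' j assume a: "(i, j) \<in> boxes lam \<and> (i', j) \<in> boxes lam \<and> i < i' \<and>
        is_primed (T (i, j)) \<and> is_primed (T (i', j))"
    then have b: "(i, j) \<in> boxes lam - nu" "(i', j) \<in> boxes lam - nu" using prim by auto
    then have "int (symval (T (i, j))) \<le> int (symval (T (i', j)))"
      using primed_value_props(2)[OF P nush(1) Q b(1) b(2)] a sv_pr unfolding val_def by simp
    then show "symval (T (i, j)) \<le> symval (T (i', j))" by simp
  next
    fix i j assume "(i, j) \<in> boxes lam \<and> is_primed (T (i, j))"
    then have b: "(i, j) \<in> boxes lam - nu" using prim by auto
    then show "int (symval (T (i, j))) \<le> int n - int (col_len lam j) + int j"
      using primed_value_props(3)[OF P nush(1) Q b] sv_pr unfolding val_def by simp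
  qed
  then show ?thesis unfolding T_def .
qed

lemma split_join_tab:
  assumes z: "(nu, (Pm, Q)) \<in> tab_triples n lam"
  shows "split_tab lam (join_tab lam (nu, (Pm, Q))) = (nu, (Pm, Q))"
proof -
  let ?T = "join_tab lam (nu, (Pm, Q))"
  have nusub: "nu \<subseteq> boxes lam" and Pm: "Pm \<in> skew_ssyt {} nu n" and Qc: "Q \<in> primed_codes n lam nu"
    using z unfolding tab_triples_def by (auto simp: shapes_in_def)
  have Q: "Q \<in> skew_ssyt nu (boxes lam) (n + sum_list lam)"
    and val1: "\<And>a. a \<in> boxes lam - nu \<Longrightarrow> 1 \<le> primed_value lam (Q a) a"
    using Qc unfolding primed_codes_def by auto
  have "unprimed_part lam ?T = nu"
    unfolding unprimed_part_def join_tab_def using nusub by auto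
  moreover have "restrict (\<lambda>a. symval (?T a)) nu = Pm"
    using skew_ssytD(1)[OF Pm] unfolding join_tab_def
    by (auto simp: restrict_def fun_eq_iff PiE_def extensional_def)
  moreover have "restrict (\<lambda>a. nat (primed_code lam (symval (?T a)) a)) (boxes lam - nu) = Q"
  proof
    fix a show "restrict (\<lambda>a. nat (primed_code lam (symval (?T a)) a)) (boxes lam - nu) a = Q a"
    proof (cases "a \<in> boxes lam - nu")
      case True
      then show ?thesis
        using val1[OF True] unfolding join_tab_def primed_code_def primed_value_def by simp
    next
      case False
      have "Q \<in> extensional (boxes lam - nu)" using skew_ssytD(1)[OF Q] by (simp add: PiE_def)
      then have "Q a = undefined" using False by (rule extensional_arb)
      then show ?thesis using False by auto
    qed
  qed
  ultimately show ?thesis unfolding split_tab_def by simp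
qed

lemma join_split_tab:
  assumes P: "is_partition lam" and T: "T \<in> supertableaux n lam"
  shows "join_tab lam (split_tab lam T) = T"
proof
  fix a
  have Tsym: "\<And>a. a \<in> boxes lam \<Longrightarrow> T a \<in> symbols n" using PiE_mem[OF supertableauxD(1)[OF T]] by blast
  show "join_tab lam (split_tab lam T) a = T a"
  proof (cases "a \<in> unprimed_part lam T")
    case True
    then have "a \<in> boxes lam" "\<not> is_primed (T a)" unfolding unprimed_part_def by auto
    then have "T a = Unp (symval (T a))" using symbol_unprimed[OF Tsym] by blast
    then show ?thesis using True unfolding join_tab_def split_tab_def by simp
  next
    case False
    show ?thesis
    proof (cases "a \<in> boxes lam")
      case True
      have pr: "is_primed (T a)" using True False unfolding unprimed_part_def by auto
      have "2 \<le> primed_code lam (symval (T a)) a"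
        using primed_code_props(1)[OF P T, of "fst a" "snd a"] True pr by simp
      moreover have "T a = Pr (symval (T a))" using symbol_primed[OF Tsym[OF True] pr] by blast
      ultimately show ?thesis
        using True False unfolding join_tab_def split_tab_def primed_code_def primed_value_def by simp
    next
      case False2: False
      have "T a = undefined" using supertableauxD(1)[OF T] False2 by (meson PiE_E)
      then show ?thesis using False False2 unfolding join_tab_def split_tab_def by simp
    qed
  qed
qed

lemma join_tab_bij:
  assumes P: "is_partition lam"
  shows "bij_betw (join_tab lam) (tab_triples n lam) (supertableaux n lam)"
proof (rule bij_betw_byWitness[where f' = "split_tab lam"])
  show "\<forall>z\<in>tab_triples n lam. split_tab lam (join_tab lam z) = z"
    using split_join_tab by fast
  show "join_tab lam ` tab_triples n lam \<subseteq> supertableaux n lam"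
    using join_tab_in[OF P] by fast
qed (use join_split_tab[OF P] split_tab_in[OF P] in auto)

lemma weight_join_tab:
  fixes x u :: "nat \<Rightarrow> 'a::comm_ring_1"
  assumes z: "(nu, (Pm, Q)) \<in> tab_triples n lam"
  defines "T \<equiv> join_tab lam (nu, (Pm, Q))"
  shows "(\<Prod>a \<in> {a \<in> boxes lam. \<not> is_primed (T a)}. x (symval (T a))) *
         (\<Prod>a \<in> {a \<in> boxes lam. is_primed (T a)}. - u (symval (T a)))
       = (\<Prod>a\<in>nu - {}. x (Pm a)) * (\<Prod>a\<in>boxes lam - nu. neg_u u (primed_value lam (Q a) a))"
proof -
  have nusub: "nu \<subseteq> boxes lam" and val1: "\<And>a. a \<in> boxes lam - nu \<Longrightarrow> 1 \<le> primed_value lam (Q a) a"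
    using z unfolding tab_triples_def primed_codes_def by (auto simp: shapes_in_def)
  have "{a \<in> boxes lam. \<not> is_primed (T a)} = nu - {}" "{a \<in> boxes lam. is_primed (T a)} = boxes lam - nu"
    using nusub unfolding T_def join_tab_def by auto
  moreover have "(\<Prod>a\<in>nu - {}. x (symval (T a))) = (\<Prod>a\<in>nu - {}. x (Pm a))"
    by (rule prod.cong) (auto simp: T_def join_tab_def)
  moreover have "(\<Prod>a\<in>boxes lam - nu. - u (symval (T a)))
      = (\<Prod>a\<in>boxes lam - nu. neg_u u (primed_value lam (Q a) a))"
    using val1 by (intro prod.cong) (auto simp: T_def join_tab_def neg_u_def)
  ultimately show ?thesis by simp
qed

lemma supertableaux_sum_split:
  fixes x u :: "nat \<Rightarrow> 'a::comm_ring_1"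
  assumes P: "is_partition lam"
  shows "(\<Sum>T \<in> supertableaux n lam.
       (\<Prod>a \<in> {a \<in> boxes lam. \<not> is_primed (T a)}. x (symval (T a))) *
       (\<Prod>a \<in> {a \<in> boxes lam. is_primed (T a)}. - u (symval (T a))))
    = (\<Sum>nu\<in>shapes_in (boxes lam). (\<Sum>Pm\<in>skew_ssyt {} nu n. \<Prod>a\<in>nu - {}. x (Pm a)) *
         (\<Sum>Q\<in>skew_ssyt nu (boxes lam) (n + sum_list lam). \<Prod>a\<in>boxes lam - nu. neg_u u (primed_value lam (Q a) a)))"
proof -
  define xw where "xw nu Pm = (\<Prod>a\<in>nu - {}. x (Pm a))" for nu :: "(nat \<times> nat) set" and Pm
  define uw where "uw nu Q = (\<Prod>a\<in>boxes lam - nu. neg_u u (primed_value lam (Q a) a))" for nu Q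
  have fin_skew: "finite (skew_ssyt D E b)" if "E \<subseteq> boxes lam" for D E b
    using finite_skew_ssyt finite_subset[OF that finite_boxes] by blast
  have fin_codes: "finite (primed_codes n lam nu)" for nu :: "(nat \<times> nat) set"
    by (rule finite_subset[OF _ fin_skew[OF subset_refl, of nu "n + sum_list lam"]]) (auto simp: primed_codes_def)
  text \<open>Codes whose decoding is not positive contribute zero, since w vanishes there.\<close>
  have drop_positivity: "(\<Sum>Q\<in>primed_codes n lam nu. uw nu Q)
      = (\<Sum>Q\<in>skew_ssyt nu (boxes lam) (n + sum_list lam). uw nu Q)" for nu :: "(nat \<times> nat) set"
  proof (rule sum.mono_neutral_left[OF fin_skew[OF subset_refl]])
    show "primed_codes n lam nu \<subseteq> skew_ssyt nu (boxes lam) (n + sum_list lam)"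
      by (auto simp: primed_codes_def)
    show "\<forall>Q\<in>skew_ssyt nu (boxes lam) (n + sum_list lam) - primed_codes n lam nu. uw nu Q = 0"
    proof
      fix Q assume "Q \<in> skew_ssyt nu (boxes lam) (n + sum_list lam) - primed_codes n lam nu"
      then obtain a where a: "a \<in> boxes lam - nu" "\<not> 1 \<le> primed_value lam (Q a) a"
        unfolding primed_codes_def by auto
      then have "neg_u u (primed_value lam (Q a) a) = 0" by (simp add: neg_u_def)
      then show "uw nu Q = 0" unfolding uw_def
        by (intro prod_zero) (use a finite_boxes in auto)
    qed
  qed
  have "(\<Sum>T \<in> supertableaux n lam.
       (\<Prod>a \<in> {a \<in> boxes lam. \<not> is_primed (T a)}. x (symval (T a))) *
       (\<Prod>a \<in> {a \<in> boxes lam. is_primed (T a)}. - u (symval (T a))))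
    = (\<Sum>z \<in> tab_triples n lam. case z of (nu, (Pm, Q)) \<Rightarrow> xw nu Pm * uw nu Q)"
    unfolding sum.reindex_bij_betw[OF join_tab_bij[OF P], symmetric]
    using weight_join_tab unfolding xw_def uw_def by (intro sum.cong) auto
  also have "\<dots> = (\<Sum>nu\<in>shapes_in (boxes lam). \<Sum>(Pm, Q)\<in>skew_ssyt {} nu n \<times> primed_codes n lam nu. xw nu Pm * uw nu Q)"
    unfolding tab_triples_def
    by (rule sum.Sigma[symmetric])
       (use finite_shapes_in[OF finite_boxes] fin_skew fin_codes in \<open>auto simp: shapes_in_def\<close>)
  also have "\<dots> = (\<Sum>nu\<in>shapes_in (boxes lam). (\<Sum>Pm\<in>skew_ssyt {} nu n. xw nu Pm) * (\<Sum>Q\<in>primed_codes n lam nu. uw nu Q))"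
    by (rule sum.cong) (simp_all add: sum.cartesian_product[symmetric] sum_product)
  also have "\<dots> = (\<Sum>nu\<in>shapes_in (boxes lam). (\<Sum>Pm\<in>skew_ssyt {} nu n. xw nu Pm) *
      (\<Sum>Q\<in>skew_ssyt nu (boxes lam) (n + sum_list lam). uw nu Q))"
    by (simp only: drop_positivity)
  finally show ?thesis unfolding xw_def uw_def .
qed

text \<open>
  Pure x-operators agree on the frame with x-operators whose w-part is shifted so far down
  (q + m - 1 + c \<le> 0) that it vanishes.\<close>
lemma x_ops_as_xu_ops:
  assumes q: "q + int n + int (sum_list lam) \<le> 1"
  shows "list_all2 (\<lambda>g g'. \<forall>a\<in>boxes lam. g a = g' a)
           (map (\<lambda>m (a::nat \<times> nat). x m) [1..<Suc n]) (xu_ops u (map x [1..<Suc n]) q)"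
  unfolding xu_ops_map list.rel_map
proof (rule list.rel_refl_strong, intro ballI)
  fix m a assume m: "m \<in> set [1..<Suc n]" and a: "a \<in> boxes lam"
  have "m \<le> n" using m by (auto simp del: upt_Suc)
  then have "q + int m - 1 + content a \<le> 0"
    using content_le[OF a] q by linarith
  then show "x m = xu_op u (x m) (q + int m - int 1) a" by (simp add: xu_op_def neg_u_def)
qed

theorem supertableaux_chain_sum:
  fixes x u :: "nat \<Rightarrow> 'a::comm_ring_1" and n :: nat and lam :: "nat list"
  assumes P: "is_partition lam"
  defines "N \<equiv> sum_list lam" and "xs \<equiv> map x [1..<Suc n]" and "q \<equiv> 1 - int (n + sum_list lam)"
  shows "(\<Sum>T \<in> supertableaux n lam.
       (\<Prod>a \<in> {a \<in> boxes lam. \<not> is_primed (T a)}. x (symval (T a))) *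
       (\<Prod>a \<in> {a \<in> boxes lam. is_primed (T a)}. - u (symval (T a))))
    = chain_sum (boxes lam) (xu_ops u xs q @ u_ops u (q + int (length xs)) (n + N)) {} (boxes lam)"
proof -
  define X where "X = map (\<lambda>m (a::nat \<times> nat). x m) [1..<Suc n]"
  define U where "U = u_ops u (q + int (length xs)) (n + N)"
  have LSh: "boxes lam \<in> shapes_in (boxes lam)" using boxes_in_shapes_in[OF P] .
  have U_map: "map (\<lambda>m a. neg_u u (primed_value lam m a)) [1..<Suc (n + N)] = U"
    unfolding U_def u_ops_map u_op_def xs_def q_def N_def primed_value_def by (simp add: algebra_simps del: upt_Suc)
  have "(\<Sum>T \<in> supertableaux n lam.
       (\<Prod>a \<in> {a \<in> boxes lam. \<not> is_primed (T a)}. x (symval (T a))) *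
       (\<Prod>a \<in> {a \<in> boxes lam. is_primed (T a)}. - u (symval (T a))))
    = (\<Sum>nu\<in>shapes_in (boxes lam). chain_sum (boxes lam) X {} nu * chain_sum (boxes lam) U nu (boxes lam))"
    unfolding supertableaux_sum_split[OF P] N_def
  proof (rule sum.cong[OF refl])
    fix nu assume nu: "nu \<in> shapes_in (boxes lam)"
    have nuL: "nu \<subseteq> boxes lam" using nu by (simp add: shapes_in_def)
    show "(\<Sum>Pm\<in>skew_ssyt {} nu n. \<Prod>a\<in>nu - {}. x (Pm a)) *
        (\<Sum>Q\<in>skew_ssyt nu (boxes lam) (n + sum_list lam). \<Prod>a\<in>boxes lam - nu. neg_u u (primed_value lam (Q a) a))
      = chain_sum (boxes lam) X {} nu * chain_sum (boxes lam) U nu (boxes lam)"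
    proof -
      have "(\<Sum>Pm\<in>skew_ssyt {} nu n. \<Prod>a\<in>nu - {}. x (Pm a)) = chain_sum (boxes lam) X {} nu"
        unfolding X_def by (rule skew_ssyt_chain_sum[OF finite_boxes empty_in_shapes_in nu]) simp
      moreover have "(\<Sum>Q\<in>skew_ssyt nu (boxes lam) (n + sum_list lam).
          \<Prod>a\<in>boxes lam - nu. neg_u u (primed_value lam (Q a) a)) = chain_sum (boxes lam) U nu (boxes lam)"
        unfolding U_map[symmetric] N_def by (rule skew_ssyt_chain_sum[OF finite_boxes nu LSh nuL])
      ultimately show ?thesis by simp
    qed
  qed
  also have "\<dots> = chain_sum (boxes lam) (X @ U) {} (boxes lam)"
    using chain_sum_append[OF finite_boxes empty_in_shapes_in, where gs=X and gs'=U and E="boxes lam"] by simp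
  also have "\<dots> = chain_sum (boxes lam) (xu_ops u xs q @ U) {} (boxes lam)"
    unfolding X_def xs_def
    by (intro chain_sum_cong list_all2_appendI x_ops_as_xu_ops) (simp_all add: q_def list.rel_refl)
  finally show ?thesis unfolding U_def .
qed

text \<open>
  The right-hand side is the chain sum of the x- and u-operators; reordering them leaves the
  chain sum that computes s_lambda(x|u).\<close>

theorem proposition4p1:
  fixes n :: nat and lam :: "nat list"
    and x :: "nat \<Rightarrow> 'a::comm_ring_1" and u :: "nat \<Rightarrow> 'a"
  assumes "0 < n" and "is_partition lam" and "length lam \<le> n"
  shows "factorial_schur n lam x u =
    (\<Sum>T \<in> supertableaux n lam.
       (\<Prod>a \<in> {a \<in> boxes lam. \<not> is_primed (T a)}. x (symval (T a))) *
       (\<Prod>a \<in> {a \<in> boxes lam. is_primed (T a)}. - u (symval (T a))))"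
proof -
  define xs where "xs = map x [1..<Suc n]"
  define q where "q = 1 - int (n + sum_list lam)"
  have "(\<Sum>T \<in> supertableaux n lam.
       (\<Prod>a \<in> {a \<in> boxes lam. \<not> is_primed (T a)}. x (symval (T a))) *
       (\<Prod>a \<in> {a \<in> boxes lam. is_primed (T a)}. - u (symval (T a))))
    = chain_sum (boxes lam) (xu_ops u xs q @ u_ops u (q + int (length xs)) (n + sum_list lam)) {} (boxes lam)"
    unfolding xs_def q_def by (rule supertableaux_chain_sum[OF assms(2)])
  also have "\<dots> = chain_sum (boxes lam) (xu_ops u xs 1) {} (boxes lam)"
    using chain_sum_reorder[OF finite_boxes boxes_rows, of q "n + sum_list lam"] unfolding q_def by simp
  also have "\<dots> = factorial_schur n lam x u"
    unfolding xs_def by (rule factorial_schur_chain_sum[OF assms(2), symmetric])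
  finally show ?thesis ..
qed

end
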